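(* Let $W$ be a group admitting an odd connected Coxeter system $(W,S)$ of rank at least $2$ whose graph $\mathcal V_{(W,S)}$ is a tree. If $w\in W$ is an involution, then its centraliser is $\operatorname{C}_W(w)=\langle w\rangle$.
   Context: A Coxeter system $(W,S)$ with $S=\{w_1,\dots,w_n\}$ means that $W$ has the presentation $\langle w_1,\dots,w_n \mid (w_iw_j)^{m_{ij}}=1\rangle$, where $m_{ii}=1$ and $m_{ij}=m_{ji}\in\{2,3,4,\dots\}\cup\{\infty\}$ for $i\neq j$ (no relation is imposed when $m_{ij}=\infty$). The numbers $m_{ij}$, $i\neq j$, are the exponents and $n$ is the rank. The system is odd if every exponent is odd or $\infty$. The graph $\mathcal V_{(W,S)}$ has vertex set $\{1,\dots,n\}$ and an edge between $i\neq j$ iff $m_{ij}<\infty$; the system is connected if $\mathcal V_{(W,S)}$ is connected. *)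

theory Defs
  imports "HOL-Algebra.Algebra" "HOL-Library.Extended_Nat"
begin

text \<open>Words in the free group on generators indexed by naturals: a letter (i,False) stands for
  the generator i, a letter (i,True) for its inverse.\<close>

primrec word_eval :: "('a, 'b) monoid_scheme \<Rightarrow> (nat \<Rightarrow> 'a) \<Rightarrow> (nat \<times> bool) list \<Rightarrow> 'a" where
  "word_eval G g [] = \<one>\<^bsub>G\<^esub>"
| "word_eval G g (x # xs) =
     (if snd x then inv\<^bsub>G\<^esub> (g (fst x)) else g (fst x)) \<otimes>\<^bsub>G\<^esub> word_eval G g xs"

text \<open>Equivalence of words modulo the normal closure of the relators R in the free group
  on the generators in I (the congruence generated by free reductions and relators).\<close>

inductive pres_eq :: "nat set \<Rightarrow> (nat \<times> bool) list set \<Rightarrow> (nat \<times> bool) list \<Rightarrow> (nat \<times> bool) list \<Rightarrow> bool"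
  for I R where
  refl: "pres_eq I R u u"
| sym: "pres_eq I R u v \<Longrightarrow> pres_eq I R v u"
| trans: "pres_eq I R u v \<Longrightarrow> pres_eq I R v w \<Longrightarrow> pres_eq I R u w"
| relator: "r \<in> R \<Longrightarrow> pres_eq I R (u @ r @ v) (u @ v)"
| free_red: "i \<in> I \<Longrightarrow> pres_eq I R (u @ [(i, b), (i, \<not> b)] @ v) (u @ v)"

definition has_presentation ::
  "('a, 'b) monoid_scheme \<Rightarrow> nat set \<Rightarrow> (nat \<Rightarrow> 'a) \<Rightarrow> (nat \<times> bool) list set \<Rightarrow> bool" where
  "has_presentation G I g R \<longleftrightarrow>
     group G \<and> (\<forall>i\<in>I. g i \<in> carrier G) \<and>
     (\<forall>r\<in>R. set r \<subseteq> I \<times> UNIV) \<and>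
     carrier G = word_eval G g ` {u. set u \<subseteq> I \<times> UNIV} \<and>
     (\<forall>u v. set u \<subseteq> I \<times> UNIV \<longrightarrow> set v \<subseteq> I \<times> UNIV \<longrightarrow>
        (word_eval G g u = word_eval G g v \<longleftrightarrow> pres_eq I R u v))"

definition coxeter_matrix :: "nat \<Rightarrow> (nat \<Rightarrow> nat \<Rightarrow> enat) \<Rightarrow> bool" where
  "coxeter_matrix n m \<longleftrightarrow>
     (\<forall>i\<in>{1..n}. m i i = 1) \<and>
     (\<forall>i\<in>{1..n}. \<forall>j\<in>{1..n}. m i j = m j i) \<and>
     (\<forall>i\<in>{1..n}. \<forall>j\<in>{1..n}. i \<noteq> j \<longrightarrow> m i j \<ge> 2)"

definition coxeter_relators :: "nat \<Rightarrow> (nat \<Rightarrow> nat \<Rightarrow> enat) \<Rightarrow> (nat \<times> bool) list set" where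
  "coxeter_relators n m =
     {concat (replicate k [(i, False), (j, False)]) | i j k.
        i \<in> {1..n} \<and> j \<in> {1..n} \<and> m i j = enat k}"

definition coxeter_system ::
  "('a, 'b) monoid_scheme \<Rightarrow> nat \<Rightarrow> (nat \<Rightarrow> 'a) \<Rightarrow> (nat \<Rightarrow> nat \<Rightarrow> enat) \<Rightarrow> bool" where
  "coxeter_system W n g m \<longleftrightarrow>
     coxeter_matrix n m \<and> has_presentation W {1..n} g (coxeter_relators n m)"

definition odd_coxeter :: "nat \<Rightarrow> (nat \<Rightarrow> nat \<Rightarrow> enat) \<Rightarrow> bool" where
  "odd_coxeter n m \<longleftrightarrow>
     (\<forall>i\<in>{1..n}. \<forall>j\<in>{1..n}. i \<noteq> j \<longrightarrow> m i j = \<infinity> \<or> (\<exists>k. m i j = enat k \<and> odd k))"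

text \<open>The graph V_(W,S): vertices 1..n, edge between i \<noteq> j iff m i j < \<infinity>.\<close>

definition cox_adj :: "nat \<Rightarrow> (nat \<Rightarrow> nat \<Rightarrow> enat) \<Rightarrow> nat \<Rightarrow> nat \<Rightarrow> bool" where
  "cox_adj n m i j \<longleftrightarrow> i \<in> {1..n} \<and> j \<in> {1..n} \<and> i \<noteq> j \<and> m i j < \<infinity>"

definition cox_connected :: "nat \<Rightarrow> (nat \<Rightarrow> nat \<Rightarrow> enat) \<Rightarrow> bool" where
  "cox_connected n m \<longleftrightarrow> (\<forall>i\<in>{1..n}. \<forall>j\<in>{1..n}. (cox_adj n m)\<^sup>*\<^sup>* i j)"

definition cox_has_cycle :: "nat \<Rightarrow> (nat \<Rightarrow> nat \<Rightarrow> enat) \<Rightarrow> bool" where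
  "cox_has_cycle n m \<longleftrightarrow>
     (\<exists>vs. length vs \<ge> 3 \<and> distinct vs \<and>
        (\<forall>k < length vs. cox_adj n m (vs ! k) (vs ! ((k + 1) mod length vs))))"

definition cox_tree :: "nat \<Rightarrow> (nat \<Rightarrow> nat \<Rightarrow> enat) \<Rightarrow> bool" where
  "cox_tree n m \<longleftrightarrow> cox_connected n m \<and> \<not> cox_has_cycle n m"

definition centraliser :: "('a, 'b) monoid_scheme \<Rightarrow> 'a \<Rightarrow> 'a set" where
  "centraliser G w = {x \<in> carrier G. x \<otimes>\<^bsub>G\<^esub> w = w \<otimes>\<^bsub>G\<^esub> x}"

end

theory Submission
  imports Defs
begin

text \<open>Induct on the number of generators. A tree has a leaf v whose only neighbour
  is u, so W is the amalgamated product of the subgroup A generated by the other generators and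
  the dihedral group D generated by g u and g v, of order 2k with k odd, over {1, g u}. This is
  witnessed by an action of W on the normal forms of the amalgam, which makes nonempty reduced
  words nontrivial. Reduced words then show that the centraliser of g u is {1, g u} as soon as
  this holds in A and in D, and that every involution is conjugate into A or D. In an odd
  dihedral group all reflections are conjugate and each is its own centraliser; inductively,
  every involution of W is conjugate to a generator, all generators are conjugate, and each
  generator is its own centraliser. Conjugating the last fact gives the theorem.\<close>

lemma word_eval_closed:
  assumes "group G" "\<forall>x\<in>set u. g (fst x) \<in> carrier G"
  shows "word_eval G g u \<in> carrier G"
proof -
  interpret group G by fact
  show ?thesis using assms(2) by (induction u) auto
qed

lemma word_eval_append:
  assumes "group G" "\<forall>x\<in>set u. g (fst x) \<in> carrier G" "\<forall>x\<in>set v. g (fst x) \<in> carrier G"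
  shows "word_eval G g (u @ v) = word_eval G g u \<otimes>\<^bsub>G\<^esub> word_eval G g v"
  using assms(2)
proof (induction u)
  case Nil
  then show ?case using word_eval_closed[OF assms(1,3)] by (simp add: group.is_monoid[OF assms(1)])
next
  case (Cons x u)
  interpret group G by fact
  show ?case using Cons word_eval_closed[OF assms(1)] assms(3) by (auto simp: m_assoc)
qed

lemma word_eval_singleton: "group G \<Longrightarrow> g i \<in> carrier G \<Longrightarrow> word_eval G g [(i, False)] = g i"
  by (simp add: group.is_monoid monoid.r_one)

lemma word_eval_in_generate:
  assumes "group G" "g ` J \<subseteq> carrier G" "set w \<subseteq> J \<times> UNIV"
  shows "word_eval G g w \<in> generate G (g ` J)"
  using assms(3)
proof (induction w)
  case Nil then show ?case by (simp add: generate.one)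
next
  case (Cons x w)
  have "g (fst x) \<in> generate G (g ` J)" using Cons.prems by (auto intro: generate.incl)
  moreover have "inv\<^bsub>G\<^esub> g (fst x) \<in> generate G (g ` J)" using Cons.prems
    by (auto intro: generate.inv)
  ultimately show ?case using Cons by (auto intro: generate.eng)
qed

lemma word_eval_image_eq_generate:
  assumes "group G" "g ` J \<subseteq> carrier G"
  shows "word_eval G g ` {w. set w \<subseteq> J \<times> UNIV} = generate G (g ` J)"
proof
  show "word_eval G g ` {w. set w \<subseteq> J \<times> UNIV} \<subseteq> generate G (g ` J)"
    using word_eval_in_generate[OF assms] by blast
next
  interpret group G by fact
  show "generate G (g ` J) \<subseteq> word_eval G g ` {w. set w \<subseteq> J \<times> UNIV}"
  proof
    fix x assume "x \<in> generate G (g ` J)"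
    then show "x \<in> word_eval G g ` {w. set w \<subseteq> J \<times> UNIV}"
    proof (induction rule: generate.induct)
      case one
      then show ?case by (auto intro!: image_eqI[of _ _ "[]"])
    next
      case (incl h)
      then obtain j where "j \<in> J" "h = g j" by blast
      then show ?case using assms(2) by (auto intro!: image_eqI[of _ _ "[(j, False)]"])
    next
      case (inv h)
      then obtain j where "j \<in> J" "h = g j" by blast
      then show ?case using assms(2) by (auto intro!: image_eqI[of _ _ "[(j, True)]"])
    next
      case (eng h1 h2)
      then obtain w1 w2 where "set w1 \<subseteq> J \<times> UNIV" "h1 = word_eval G g w1"
        "set w2 \<subseteq> J \<times> UNIV" "h2 = word_eval G g w2" by blast
      moreover have "\<forall>x\<in>set w1 \<union> set w2. g (fst x) \<in> carrier G"
        using calculation(1,3) assms(2) by fastforce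
      ultimately show ?case using word_eval_append[OF assms(1)]
        by (auto intro!: image_eqI[of _ _ "w1 @ w2"])
    qed
  qed
qed

lemma word_eval_subgroup:
  assumes "group G" "subgroup H G" "g ` J \<subseteq> H" "set w \<subseteq> J \<times> UNIV"
  shows "word_eval (G\<lparr>carrier := H\<rparr>) g w = word_eval G g w"
  using assms(4)
proof (induction w)
  case (Cons x w)
  then have "g (fst x) \<in> H" using assms(3) by auto
  then show ?case using Cons group.m_inv_consistent[OF assms(1,2)] by simp
qed simp

lemma has_presentation_group: "has_presentation G I g R \<Longrightarrow> group G"
  unfolding has_presentation_def by blast

lemma has_presentation_gen: "has_presentation G I g R \<Longrightarrow> i \<in> I \<Longrightarrow> g i \<in> carrier G"
  unfolding has_presentation_def by blast

lemma has_presentation_carrier: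
  "has_presentation G I g R \<Longrightarrow> carrier G = word_eval G g ` {u. set u \<subseteq> I \<times> UNIV}"
  unfolding has_presentation_def by blast

lemma has_presentation_relator: "has_presentation G I g R \<Longrightarrow> r \<in> R \<Longrightarrow> set r \<subseteq> I \<times> UNIV"
  unfolding has_presentation_def by blast

lemma has_presentation_eq_iff:
  "has_presentation G I g R \<Longrightarrow> set u \<subseteq> I \<times> UNIV \<Longrightarrow> set v \<subseteq> I \<times> UNIV \<Longrightarrow>
     word_eval G g u = word_eval G g v \<longleftrightarrow> pres_eq I R u v"
  unfolding has_presentation_def by blast

lemma has_presentation_carrier_generate:
  "has_presentation G I g R \<Longrightarrow> carrier G = generate G (g ` I)"
  using has_presentation_carrier word_eval_image_eq_generate has_presentation_group
    has_presentation_gen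
  by (metis image_subsetI)

lemma has_presentation_relator_eval:
  assumes "has_presentation G I g R" "r \<in> R"
  shows "word_eval G g r = \<one>\<^bsub>G\<^esub>"
proof -
  have "pres_eq I R ([] @ r @ []) ([] @ [])" by (rule pres_eq.relator[OF assms(2)])
  then show ?thesis
    using has_presentation_eq_iff[OF assms(1) has_presentation_relator[OF assms], of "[]"] by simp
qed

lemma pres_eq_mono:
  assumes "I \<subseteq> J" "R \<subseteq> S"
  shows "pres_eq I R x y \<Longrightarrow> pres_eq J S x y"
proof (induction rule: pres_eq.induct)
  case (free_red i u b v)
  then show ?case using assms pres_eq.free_red by blast
qed (use assms in \<open>auto intro: pres_eq.intros\<close>)

subsection \<open>Actions of groups generated by involutions\<close>

fun act_word :: "(nat \<Rightarrow> 'y \<Rightarrow> 'y) \<Rightarrow> (nat \<times> bool) list \<Rightarrow> 'y \<Rightarrow> 'y" where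
  "act_word f [] y = y"
| "act_word f (x # xs) y = f (fst x) (act_word f xs y)"

lemma act_word_append: "act_word f (u @ v) y = act_word f u (act_word f v y)"
  by (induction u) auto

lemma act_word_closed: "(\<And>i y. y \<in> Y \<Longrightarrow> f i y \<in> Y) \<Longrightarrow> y \<in> Y \<Longrightarrow> act_word f u y \<in> Y"
  by (induction u) auto

lemma act_word_replicate:
  "act_word f (concat (replicate n [(i, b), (j, b')])) y = ((f i \<circ> f j) ^^ n) y"
  by (induction n) auto

text \<open>Each generator acts by the same map as its inverse, which is why the maps f i have to be
  involutions.\<close>

lemma pres_eq_act_word:
  assumes closed: "\<And>i y. y \<in> Y \<Longrightarrow> f i y \<in> Y"
    and involutive: "\<And>i y. i \<in> I \<Longrightarrow> y \<in> Y \<Longrightarrow> f i (f i y) = y"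
    and relators: "\<And>r y. r \<in> R \<Longrightarrow> y \<in> Y \<Longrightarrow> act_word f r y = y"
  shows "pres_eq I R u v \<Longrightarrow> y \<in> Y \<Longrightarrow> act_word f u y = act_word f v y"
proof (induction arbitrary: y rule: pres_eq.induct)
  case (relator r u v)
  then show ?case using relators act_word_closed[OF closed] by (simp add: act_word_append)
next
  case (free_red i u b v)
  then show ?case using involutive act_word_closed[OF closed] by (simp add: act_word_append)
qed auto

definition induced_action ::
  "('a, 'b) monoid_scheme \<Rightarrow> nat set \<Rightarrow> (nat \<Rightarrow> 'a) \<Rightarrow> (nat \<Rightarrow> 'y \<Rightarrow> 'y) \<Rightarrow> 'a \<Rightarrow> 'y \<Rightarrow> 'y" where
  "induced_action G I g f x = act_word f (SOME u. set u \<subseteq> I \<times> UNIV \<and> word_eval G g u = x)"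

locale presented_action =
  fixes G :: "('a, 'b) monoid_scheme" and I g R and Y :: "'y set" and f :: "nat \<Rightarrow> 'y \<Rightarrow> 'y"
  assumes presentation: "has_presentation G I g R"
    and closed: "\<And>i y. y \<in> Y \<Longrightarrow> f i y \<in> Y"
    and involutive: "\<And>i y. i \<in> I \<Longrightarrow> y \<in> Y \<Longrightarrow> f i (f i y) = y"
    and relators: "\<And>r y. r \<in> R \<Longrightarrow> y \<in> Y \<Longrightarrow> act_word f r y = y"
begin

abbreviation \<Phi> where "\<Phi> \<equiv> induced_action G I g f"

lemma induced_action_word_eval:
  assumes "set u \<subseteq> I \<times> UNIV" "y \<in> Y"
  shows "\<Phi> (word_eval G g u) y = act_word f u y"
proof -
  let ?P = "\<lambda>w. set w \<subseteq> I \<times> UNIV \<and> word_eval G g w = word_eval G g u"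
  have "?P (SOME w. ?P w)" by (rule someI[of ?P u]) (use assms in auto)
  then have "pres_eq I R (SOME w. ?P w) u"
    using has_presentation_eq_iff[OF presentation] assms by blast
  then show ?thesis
    unfolding induced_action_def using pres_eq_act_word[OF closed involutive relators] assms(2)
    by blast
qed

lemma obtain_word:
  assumes "x \<in> carrier G"
  obtains u where "set u \<subseteq> I \<times> UNIV" "x = word_eval G g u"
  using assms has_presentation_carrier[OF presentation] by blast

lemma induced_action_closed: "x \<in> carrier G \<Longrightarrow> y \<in> Y \<Longrightarrow> \<Phi> x y \<in> Y"
  by (metis obtain_word induced_action_word_eval act_word_closed closed)

lemma induced_action_mult:
  assumes "x \<in> carrier G" "z \<in> carrier G" "y \<in> Y"
  shows "\<Phi> (x \<otimes>\<^bsub>G\<^esub> z) y = \<Phi> x (\<Phi> z y)"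
proof -
  obtain u where u: "set u \<subseteq> I \<times> UNIV" "x = word_eval G g u" using obtain_word assms(1) .
  obtain v where v: "set v \<subseteq> I \<times> UNIV" "z = word_eval G g v" using obtain_word assms(2) .
  have "x \<otimes>\<^bsub>G\<^esub> z = word_eval G g (u @ v)"
    using u v word_eval_append[OF has_presentation_group[OF presentation]]
      has_presentation_gen[OF presentation] by fastforce
  moreover have "act_word f v y \<in> Y" by (rule act_word_closed[OF closed assms(3)])
  ultimately show ?thesis
    using u v assms(3) induced_action_word_eval[of "u @ v"] induced_action_word_eval
    by (simp add: act_word_append)
qed

lemma induced_action_one: "y \<in> Y \<Longrightarrow> \<Phi> \<one>\<^bsub>G\<^esub> y = y"
  using induced_action_word_eval[of "[]" y] by simp

lemma induced_action_gen: "i \<in> I \<Longrightarrow> y \<in> Y \<Longrightarrow> \<Phi> (g i) y = f i y"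
  using induced_action_word_eval[of "[(i, False)]" y] has_presentation_gen[OF presentation]
    word_eval_singleton[OF has_presentation_group[OF presentation]] by simp

end

lemma act_word_Not: "act_word (\<lambda>_. Not) w y = (if even (length w) then y else \<not> y)"
  by (induction w) auto

text \<open>Every generator acts on the booleans by negation, which fixes relators of even length.\<close>

lemma has_presentation_gen_ne_one:
  assumes "has_presentation G I g R" "\<And>r. r \<in> R \<Longrightarrow> even (length r)" "i \<in> I"
  shows "g i \<noteq> \<one>\<^bsub>G\<^esub>"
proof -
  interpret presented_action G I g R UNIV "\<lambda>_. Not"
    by unfold_locales (use assms(1,2) act_word_Not in auto)
  have "\<Phi> (g i) True \<noteq> \<Phi> \<one>\<^bsub>G\<^esub> True" using induced_action_gen[OF assms(3)] induced_action_one by simp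
  then show ?thesis by metis
qed

text \<open>The induction deletes vertices, so the notions of the statement are generalised from
  {1..n} to an arbitrary index set.\<close>

definition coxeter_matrix_on :: "nat set \<Rightarrow> (nat \<Rightarrow> nat \<Rightarrow> enat) \<Rightarrow> bool" where
  "coxeter_matrix_on I m \<longleftrightarrow>
     (\<forall>i\<in>I. m i i = 1) \<and> (\<forall>i\<in>I. \<forall>j\<in>I. m i j = m j i) \<and> (\<forall>i\<in>I. \<forall>j\<in>I. i \<noteq> j \<longrightarrow> m i j \<ge> 2)"

definition odd_coxeter_on :: "nat set \<Rightarrow> (nat \<Rightarrow> nat \<Rightarrow> enat) \<Rightarrow> bool" where
  "odd_coxeter_on I m \<longleftrightarrow> (\<forall>i\<in>I. \<forall>j\<in>I. i \<noteq> j \<longrightarrow> m i j = \<infinity> \<or> (\<exists>k. m i j = enat k \<and> odd k))"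

definition coxeter_relators_on :: "nat set \<Rightarrow> (nat \<Rightarrow> nat \<Rightarrow> enat) \<Rightarrow> (nat \<times> bool) list set" where
  "coxeter_relators_on I m =
     {concat (replicate k [(i, False), (j, False)]) | i j k. i \<in> I \<and> j \<in> I \<and> m i j = enat k}"

definition cox_adj_on :: "nat set \<Rightarrow> (nat \<Rightarrow> nat \<Rightarrow> enat) \<Rightarrow> nat \<Rightarrow> nat \<Rightarrow> bool" where
  "cox_adj_on I m i j \<longleftrightarrow> i \<in> I \<and> j \<in> I \<and> i \<noteq> j \<and> m i j < \<infinity>"

definition cox_connected_on :: "nat set \<Rightarrow> (nat \<Rightarrow> nat \<Rightarrow> enat) \<Rightarrow> bool" where
  "cox_connected_on I m \<longleftrightarrow> (\<forall>i\<in>I. \<forall>j\<in>I. (cox_adj_on I m)\<^sup>*\<^sup>* i j)"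

definition cox_has_cycle_on :: "nat set \<Rightarrow> (nat \<Rightarrow> nat \<Rightarrow> enat) \<Rightarrow> bool" where
  "cox_has_cycle_on I m \<longleftrightarrow>
     (\<exists>vs. length vs \<ge> 3 \<and> distinct vs \<and>
        (\<forall>k < length vs. cox_adj_on I m (vs ! k) (vs ! ((k + 1) mod length vs))))"

definition cox_leaf_on :: "nat set \<Rightarrow> (nat \<Rightarrow> nat \<Rightarrow> enat) \<Rightarrow> nat \<Rightarrow> nat \<Rightarrow> bool" where
  "cox_leaf_on I m v u \<longleftrightarrow>
     v \<in> I \<and> u \<in> I \<and> u \<noteq> v \<and> m v u < \<infinity> \<and> (\<forall>j\<in>I. j \<noteq> v \<longrightarrow> j \<noteq> u \<longrightarrow> m v j = \<infinity>)"

lemma coxeter_matrix_eq_on: "coxeter_matrix n m = coxeter_matrix_on {1..n} m"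
  unfolding coxeter_matrix_def coxeter_matrix_on_def by blast

lemma odd_coxeter_eq_on: "odd_coxeter n m = odd_coxeter_on {1..n} m"
  unfolding odd_coxeter_def odd_coxeter_on_def by blast

lemma coxeter_relators_eq_on: "coxeter_relators n m = coxeter_relators_on {1..n} m"
  unfolding coxeter_relators_def coxeter_relators_on_def by blast

lemma cox_adj_eq_on: "cox_adj n m = cox_adj_on {1..n} m"
  unfolding cox_adj_def cox_adj_on_def by blast

lemma cox_connected_eq_on: "cox_connected n m = cox_connected_on {1..n} m"
  unfolding cox_connected_def cox_connected_on_def cox_adj_eq_on ..

lemma cox_has_cycle_eq_on: "cox_has_cycle n m = cox_has_cycle_on {1..n} m"
  unfolding cox_has_cycle_def cox_has_cycle_on_def cox_adj_eq_on ..

lemma coxeter_matrix_on_sym: "coxeter_matrix_on I m \<Longrightarrow> i \<in> I \<Longrightarrow> j \<in> I \<Longrightarrow> m i j = m j i"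
  unfolding coxeter_matrix_on_def by blast

lemma coxeter_matrix_on_diag: "coxeter_matrix_on I m \<Longrightarrow> i \<in> I \<Longrightarrow> m i i = 1"
  unfolding coxeter_matrix_on_def by blast

lemma coxeter_matrix_on_subset: "coxeter_matrix_on I m \<Longrightarrow> J \<subseteq> I \<Longrightarrow> coxeter_matrix_on J m"
  unfolding coxeter_matrix_on_def by blast

lemma odd_coxeter_on_subset: "odd_coxeter_on I m \<Longrightarrow> J \<subseteq> I \<Longrightarrow> odd_coxeter_on J m"
  unfolding odd_coxeter_on_def by blast

lemma cox_has_cycle_on_mono: "cox_has_cycle_on J m \<Longrightarrow> J \<subseteq> I \<Longrightarrow> cox_has_cycle_on I m"
  unfolding cox_has_cycle_on_def cox_adj_on_def by blast

lemma coxeter_relators_on_mono: "I \<subseteq> J \<Longrightarrow> coxeter_relators_on I m \<subseteq> coxeter_relators_on J m"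
  unfolding coxeter_relators_on_def by blast

lemma coxeter_relators_on_subset: "r \<in> coxeter_relators_on I m \<Longrightarrow> set r \<subseteq> I \<times> UNIV"
  unfolding coxeter_relators_on_def by (auto split: if_splits)

lemma coxeter_relators_on_even: "r \<in> coxeter_relators_on I m \<Longrightarrow> even (length r)"
  unfolding coxeter_relators_on_def by (auto simp: length_concat sum_list_replicate)

lemma word_eval_replicate:
  assumes "group G" "g i \<in> carrier G" "g j \<in> carrier G"
  shows "word_eval G g (concat (replicate k [(i, False), (j, False)])) = (g i \<otimes>\<^bsub>G\<^esub> g j) [^]\<^bsub>G\<^esub> k"
proof (induction k)
  case (Suc k)
  interpret group G by fact
  have "(g i \<otimes>\<^bsub>G\<^esub> g j) [^]\<^bsub>G\<^esub> Suc k = (g i \<otimes>\<^bsub>G\<^esub> g j) \<otimes>\<^bsub>G\<^esub> (g i \<otimes>\<^bsub>G\<^esub> g j) [^]\<^bsub>G\<^esub> k"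
    using assms(2,3) by (simp only: nat_pow_Suc2 m_closed)
  then show ?case using Suc assms(2,3) by (simp add: m_assoc del: nat_pow_Suc)
qed simp

lemma coxeter_pow_eq_one:
  assumes "has_presentation W I g (coxeter_relators_on I m)" "i \<in> I" "j \<in> I" "m i j = enat k"
  shows "(g i \<otimes>\<^bsub>W\<^esub> g j) [^]\<^bsub>W\<^esub> k = \<one>\<^bsub>W\<^esub>"
proof -
  have "concat (replicate k [(i, False), (j, False)]) \<in> coxeter_relators_on I m"
    unfolding coxeter_relators_on_def using assms(2-4) by blast
  then show ?thesis
    using has_presentation_relator_eval[OF assms(1)] word_eval_replicate[OF has_presentation_group]
      has_presentation_gen assms by metis
qed

lemma coxeter_gen_square:
  assumes "has_presentation W I g (coxeter_relators_on I m)" "coxeter_matrix_on I m" "i \<in> I"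
  shows "g i \<otimes>\<^bsub>W\<^esub> g i = \<one>\<^bsub>W\<^esub>"
proof -
  have "m i i = enat 1" using coxeter_matrix_on_diag[OF assms(2,3)] by (simp add: one_enat_def)
  interpret group W using has_presentation_group[OF assms(1)] .
  show ?thesis
    using coxeter_pow_eq_one[OF assms(1,3,3) \<open>m i i = enat 1\<close>] has_presentation_gen[OF assms(1,3)]
    by simp
qed

lemma coxeter_gen_ne_one:
  "has_presentation W I g (coxeter_relators_on I m) \<Longrightarrow> i \<in> I \<Longrightarrow> g i \<noteq> \<one>\<^bsub>W\<^esub>"
  using has_presentation_gen_ne_one coxeter_relators_on_even by blast

subsection \<open>Deleting a leaf\<close>

definition fold_leaf :: "nat \<Rightarrow> nat \<Rightarrow> nat \<times> bool \<Rightarrow> nat \<times> bool" where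
  "fold_leaf v u x = (if fst x = v then (u, snd x) else x)"

lemma map_fold_leaf_id: "set w \<subseteq> (I - {v}) \<times> UNIV \<Longrightarrow> map (fold_leaf v u) w = w"
  by (induction w) (auto simp: fold_leaf_def)

lemma pres_eq_replicate_involution:
  assumes "u \<in> I" "m u u = 1"
  shows "pres_eq I (coxeter_relators_on I m)
    (x @ concat (replicate k [(u, False), (u, False)]) @ y) (x @ y)"
proof (induction k)
  case (Suc k)
  have "[(u, False), (u, False)] \<in> coxeter_relators_on I m"
    unfolding coxeter_relators_on_def
    by (rule CollectI, intro exI[of _ u] exI[of _ 1]) (simp add: assms one_enat_def)
  from pres_eq.relator[OF this, where u = x
      and v = "concat (replicate k [(u, False), (u, False)]) @ y"]
  show ?case using Suc by (auto intro: pres_eq.trans)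
qed (simp add: pres_eq.refl)

text \<open>Identifying the leaf v with its neighbour u maps every relator to a relator, or to a
  power of the relator u u, because v is joined to no other vertex.\<close>

lemma pres_eq_fold_leaf:
  assumes mat: "coxeter_matrix_on I m" and leaf: "cox_leaf_on I m v u"
  shows "pres_eq I (coxeter_relators_on I m) x y \<Longrightarrow>
    pres_eq (I - {v}) (coxeter_relators_on (I - {v}) m)
      (map (fold_leaf v u) x) (map (fold_leaf v u) y)"
proof (induction rule: pres_eq.induct)
  case (relator r x y)
  obtain i j k where r: "r = concat (replicate k [(i, False), (j, False)])"
    "i \<in> I" "j \<in> I" "m i j = enat k"
    using relator unfolding coxeter_relators_on_def by blast
  let ?i = "if i = v then u else i" and ?j = "if j = v then u else j"
  have mr: "map (fold_leaf v u) r = concat (replicate k [(?i, False), (?j, False)])"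
    unfolding r(1) by (induction k) (auto simp: fold_leaf_def)
  have J: "?i \<in> I - {v}" "?j \<in> I - {v}" using r leaf unfolding cox_leaf_on_def by auto
  show ?case
  proof (cases "i = v \<or> j = v")
    case False
    then have "map (fold_leaf v u) r \<in> coxeter_relators_on (I - {v}) m"
      unfolding mr coxeter_relators_on_def using J r by auto
    then show ?thesis using pres_eq.relator by simp
  next
    case True
    then have "?i = u" "?j = u"
      using r leaf coxeter_matrix_on_sym[OF mat r(2,3)] unfolding cox_leaf_on_def by force+
    moreover have "m u u = 1" using mat leaf coxeter_matrix_on_diag unfolding cox_leaf_on_def
      by blast
    ultimately show ?thesis using mr pres_eq_replicate_involution J(1) by simp
  qed
next
  case (free_red i x b y)
  let ?i = "if i = v then u else i"
  have "?i \<in> I - {v}" using free_red leaf unfolding cox_leaf_on_def by auto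
  moreover have "map (fold_leaf v u) (x @ [(i, b), (i, \<not> b)] @ y) =
      map (fold_leaf v u) x @ [(?i, b), (?i, \<not> b)] @ map (fold_leaf v u) y"
    by (simp add: fold_leaf_def)
  ultimately show ?case using pres_eq.free_red by simp
next
  case (sym x y)
  show ?case by (rule pres_eq.sym[OF sym.IH])
next
  case (trans x y z)
  then show ?case by (blast intro: pres_eq.trans)
qed (rule pres_eq.refl)

lemma pres_eq_delete_leaf_iff:
  assumes mat: "coxeter_matrix_on I m" and leaf: "cox_leaf_on I m v u"
    and xy: "set x \<subseteq> (I - {v}) \<times> UNIV" "set y \<subseteq> (I - {v}) \<times> UNIV"
  shows "pres_eq I (coxeter_relators_on I m) x y \<longleftrightarrow>
    pres_eq (I - {v}) (coxeter_relators_on (I - {v}) m) x y"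
proof
  assume "pres_eq I (coxeter_relators_on I m) x y"
  from pres_eq_fold_leaf[OF mat leaf this]
  show "pres_eq (I - {v}) (coxeter_relators_on (I - {v}) m) x y"
    unfolding map_fold_leaf_id[OF xy(1)] map_fold_leaf_id[OF xy(2)] .
next
  assume "pres_eq (I - {v}) (coxeter_relators_on (I - {v}) m) x y"
  then show "pres_eq I (coxeter_relators_on I m) x y"
    by (rule pres_eq_mono[OF Diff_subset coxeter_relators_on_mono[OF Diff_subset]])
qed

lemma has_presentation_delete_leaf:
  assumes pres: "has_presentation W I g (coxeter_relators_on I m)"
    and mat: "coxeter_matrix_on I m" and leaf: "cox_leaf_on I m v u"
  shows "has_presentation (W\<lparr>carrier := generate W (g ` (I - {v}))\<rparr>) (I - {v}) g
           (coxeter_relators_on (I - {v}) m)"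
proof -
  let ?J = "I - {v}"
  let ?A = "W\<lparr>carrier := generate W (g ` ?J)\<rparr>"
  interpret group W using has_presentation_group[OF pres] .
  have genJ: "g ` ?J \<subseteq> carrier W" using has_presentation_gen[OF pres] by blast
  have sub: "subgroup (generate W (g ` ?J)) W" by (rule generate_is_subgroup[OF genJ])
  have ev: "word_eval ?A g w = word_eval W g w" if "set w \<subseteq> ?J \<times> UNIV" for w
    by (rule word_eval_subgroup[OF is_group sub _ that]) (auto intro: generate.incl)
  have "carrier ?A = word_eval W g ` {w. set w \<subseteq> ?J \<times> UNIV}"
    using word_eval_image_eq_generate[OF is_group genJ] by simp
  also have "\<dots> = word_eval ?A g ` {w. set w \<subseteq> ?J \<times> UNIV}"
    using ev by (intro image_cong) simp_all
  finally have "carrier ?A = word_eval ?A g ` {w. set w \<subseteq> ?J \<times> UNIV}" .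
  moreover have "\<forall>i\<in>?J. g i \<in> carrier ?A" by (auto intro: generate.incl)
  ultimately show ?thesis
    unfolding has_presentation_def
  proof (intro conjI)
    show "group ?A" by (rule subgroup_imp_group[OF sub])
    show "\<forall>r\<in>coxeter_relators_on ?J m. set r \<subseteq> ?J \<times> UNIV"
      using coxeter_relators_on_subset by blast
    show "\<forall>x y. set x \<subseteq> ?J \<times> UNIV \<longrightarrow> set y \<subseteq> ?J \<times> UNIV \<longrightarrow>
        (word_eval ?A g x = word_eval ?A g y) = pres_eq ?J (coxeter_relators_on ?J m) x y"
    proof (intro allI impI)
      fix x y :: "(nat \<times> bool) list"
      assume xy: "set x \<subseteq> ?J \<times> UNIV" "set y \<subseteq> ?J \<times> UNIV"
      then have "set x \<subseteq> I \<times> UNIV" "set y \<subseteq> I \<times> UNIV" by auto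
      then show "(word_eval ?A g x = word_eval ?A g y) = pres_eq ?J (coxeter_relators_on ?J m) x y"
        using ev[OF xy(1)] ev[OF xy(2)] has_presentation_eq_iff[OF pres]
          pres_eq_delete_leaf_iff[OF mat leaf xy] by simp
    qed
  qed
qed

subsection \<open>Leaves of trees\<close>

lemma cox_adj_on_sym: "coxeter_matrix_on I m \<Longrightarrow> cox_adj_on I m i j \<Longrightarrow> cox_adj_on I m j i"
  unfolding cox_adj_on_def using coxeter_matrix_on_sym by metis

definition cox_path_on :: "nat set \<Rightarrow> (nat \<Rightarrow> nat \<Rightarrow> enat) \<Rightarrow> nat list \<Rightarrow> bool" where
  "cox_path_on I m vs \<longleftrightarrow> vs \<noteq> [] \<and> distinct vs \<and> set vs \<subseteq> I \<and>
     (\<forall>k. Suc k < length vs \<longrightarrow> cox_adj_on I m (vs ! k) (vs ! Suc k))"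

lemma cox_path_on_length: "finite I \<Longrightarrow> cox_path_on I m vs \<Longrightarrow> length vs \<le> card I"
  unfolding cox_path_on_def by (metis card_mono distinct_card)

lemma cox_path_on_snoc:
  assumes "cox_path_on I m vs" "j \<notin> set vs" "cox_adj_on I m (last vs) j"
  shows "cox_path_on I m (vs @ [j])"
  unfolding cox_path_on_def
proof (intro conjI allI impI)
  fix k assume k: "Suc k < length (vs @ [j])"
  show "cox_adj_on I m ((vs @ [j]) ! k) ((vs @ [j]) ! Suc k)"
  proof (cases "Suc k < length vs")
    case True
    then show ?thesis using assms(1) unfolding cox_path_on_def by (simp add: nth_append)
  next
    case False
    then have "k = length vs - 1" "Suc k = length vs" using k by auto
    then show ?thesis using assms(1,3) unfolding cox_path_on_def
      by (simp add: nth_append last_conv_nth)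
  qed
qed (use assms in \<open>auto simp: cox_path_on_def cox_adj_on_def\<close>)

lemma cox_path_on_closing_edge:
  assumes path: "cox_path_on I m vs" and p: "p + 3 \<le> length vs"
    and adj: "cox_adj_on I m (last vs) (vs ! p)"
  shows "cox_has_cycle_on I m"
  unfolding cox_has_cycle_on_def
proof (intro exI conjI allI impI)
  let ?cs = "drop p vs"
  show "3 \<le> length ?cs" "distinct ?cs" using p path unfolding cox_path_on_def by auto
  fix k assume k: "k < length ?cs"
  show "cox_adj_on I m (?cs ! k) (?cs ! ((k + 1) mod length ?cs))"
  proof (cases "Suc k < length ?cs")
    case True
    then show ?thesis using path unfolding cox_path_on_def by auto
  next
    case False
    then have "p + k = length vs - 1" "Suc k = length ?cs" using k by auto
    moreover have "vs \<noteq> []" using p by auto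
    ultimately show ?thesis using adj by (simp add: last_conv_nth)
  qed
qed

lemma cox_leaf_on_exists:
  assumes fin: "finite I" and card: "card I \<ge> 2" and conn: "cox_connected_on I m"
    and acyclic: "\<not> cox_has_cycle_on I m" and mat: "coxeter_matrix_on I m"
  obtains v u where "cox_leaf_on I m v u"
proof -
  have "\<not> card I \<le> Suc 0" using card by simp
  then obtain i j where ij: "i \<in> I" "j \<in> I" "i \<noteq> j" using card_le_Suc0_iff_eq[OF fin] by blast
  then obtain k where "cox_adj_on I m i k"
    using conn unfolding cox_connected_on_def by (metis converse_rtranclpE)
  then have edge: "cox_path_on I m [i, k]" unfolding cox_path_on_def cox_adj_on_def by auto
  obtain vs where vs: "cox_path_on I m vs"
    and longest: "\<And>ws. cox_path_on I m ws \<Longrightarrow> length ws \<le> length vs"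
    using Lattices_Big.ex_has_greatest_nat[of "cox_path_on I m" "[i, k]" length "Suc (card I)"] edge
      cox_path_on_length[OF fin] by (meson less_Suc_eq_le)
  have two: "length vs \<ge> 2" using longest[OF edge] by simp
  define v u where "v = last vs" and "u = vs ! (length vs - 2)"
  have "Suc (length vs - 2) = length vs - 1" "vs \<noteq> []" using two by auto
  then have last_eq: "last vs = vs ! Suc (length vs - 2)" by (simp add: last_conv_nth)
  have "cox_adj_on I m u v"
    using vs two unfolding cox_path_on_def u_def v_def last_eq by (simp add: Suc_diff_Suc)
  then have vu: "cox_adj_on I m v u" by (rule cox_adj_on_sym[OF mat])
  have "m v j = \<infinity>" if j: "j \<in> I" "j \<noteq> v" "j \<noteq> u" for j
  proof (rule ccontr)
    assume "m v j \<noteq> \<infinity>"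
    then have vj: "cox_adj_on I m (last vs) j" using vu j unfolding cox_adj_on_def v_def by auto
    show False
    proof (cases "j \<in> set vs")
      case False
      then show False using longest[OF cox_path_on_snoc[OF vs False vj]] by simp
    next
      case True
      then obtain p where p: "p < length vs" "vs ! p = j" by (metis in_set_conv_nth)
      have "p \<noteq> length vs - 1" using p j(2) \<open>vs \<noteq> []\<close> unfolding v_def by (auto simp: last_conv_nth)
      moreover have "p \<noteq> length vs - 2" using p j(3) unfolding u_def by auto
      ultimately have "p + 3 \<le> length vs" using p(1) by linarith
      then show False using cox_path_on_closing_edge[OF vs _ vj[folded p(2)]] acyclic by blast
    qed
  qed
  with vu show ?thesis using that unfolding cox_leaf_on_def cox_adj_on_def by blast
qed

lemma cox_connected_on_delete_leaf:
  assumes conn: "cox_connected_on I m" and mat: "coxeter_matrix_on I m"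
    and leaf: "cox_leaf_on I m v u"
  shows "cox_connected_on (I - {v}) m"
proof -
  have neighbour: "j = u" if "cox_adj_on I m v j" for j
    using that leaf unfolding cox_leaf_on_def cox_adj_on_def by auto
  have walk: "(cox_adj_on I m)\<^sup>*\<^sup>* i j \<Longrightarrow> i \<in> I - {v} \<Longrightarrow>
      (cox_adj_on (I - {v}) m)\<^sup>*\<^sup>* i (if j = v then u else j)" for i j
  proof (induction rule: rtranclp_induct)
    case (step k j)
    then have ik: "(cox_adj_on (I - {v}) m)\<^sup>*\<^sup>* i (if k = v then u else k)" by blast
    consider "k = v" | "k \<noteq> v" "j = v" | "k \<noteq> v" "j \<noteq> v" by blast
    then show ?case
    proof cases
      case 1
      then have "j = u" "j \<noteq> v" using neighbour step(2) unfolding cox_adj_on_def by auto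
      then show ?thesis using ik 1 by simp
    next
      case 2
      then have "k = u" using neighbour cox_adj_on_sym[OF mat step(2)] by simp
      then show ?thesis using ik 2 by simp
    next
      case 3
      then have "cox_adj_on (I - {v}) m k j" using step(2) unfolding cox_adj_on_def by auto
      then show ?thesis using ik 3 by auto
    qed
  qed simp
  show ?thesis
    unfolding cox_connected_on_def
  proof (intro ballI)
    fix i j assume ij: "i \<in> I - {v}" "j \<in> I - {v}"
    then have "(cox_adj_on I m)\<^sup>*\<^sup>* i j" using conn unfolding cox_connected_on_def by blast
    from walk[OF this ij(1)] show "(cox_adj_on (I - {v}) m)\<^sup>*\<^sup>* i j" using ij(2) by simp
  qed
qed

definition conjugate :: "('a, 'b) monoid_scheme \<Rightarrow> 'a \<Rightarrow> 'a \<Rightarrow> bool" where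
  "conjugate G x y \<longleftrightarrow> (\<exists>h\<in>carrier G. y = h \<otimes>\<^bsub>G\<^esub> x \<otimes>\<^bsub>G\<^esub> inv\<^bsub>G\<^esub> h)"

context group
begin

lemma inv_cancel_left: "x \<in> carrier G \<Longrightarrow> y \<in> carrier G \<Longrightarrow> inv x \<otimes> (x \<otimes> y) = y"
  by (simp add: m_assoc[symmetric])

lemma conj_mult:
  "h \<in> carrier G \<Longrightarrow> a \<in> carrier G \<Longrightarrow> b \<in> carrier G \<Longrightarrow>
     (h \<otimes> a \<otimes> inv h) \<otimes> (h \<otimes> b \<otimes> inv h) = h \<otimes> (a \<otimes> b) \<otimes> inv h"
  by (simp add: m_assoc inv_cancel_left)

lemma conj_conj:
  "h \<in> carrier G \<Longrightarrow> h' \<in> carrier G \<Longrightarrow> a \<in> carrier G \<Longrightarrow>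
     h \<otimes> (h' \<otimes> a \<otimes> inv h') \<otimes> inv h = (h \<otimes> h') \<otimes> a \<otimes> inv (h \<otimes> h')"
  by (simp add: m_assoc inv_mult_group)

lemma conj_eq_one_iff: "h \<in> carrier G \<Longrightarrow> a \<in> carrier G \<Longrightarrow> h \<otimes> a \<otimes> inv h = \<one> \<longleftrightarrow> a = \<one>"
  using conjugation_is_inj[of h a \<one>] by auto

lemma conjugate_refl: "x \<in> carrier G \<Longrightarrow> conjugate G x x"
  unfolding conjugate_def by (intro bexI[of _ \<one>]) simp_all

lemma conjugate_trans:
  assumes "conjugate G x y" "conjugate G y z" "x \<in> carrier G"
  shows "conjugate G x z"
  using assms conj_conj unfolding conjugate_def by (metis m_closed)

lemma conjugate_sym:
  assumes "conjugate G x y" "x \<in> carrier G"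
  shows "conjugate G y x"
proof -
  obtain h where h: "h \<in> carrier G" "y = h \<otimes> x \<otimes> inv h" using assms(1) unfolding conjugate_def
    by blast
  then have "x = inv h \<otimes> y \<otimes> inv (inv h)" using assms(2) by (simp add: m_assoc inv_cancel_left)
  then show ?thesis unfolding conjugate_def using h(1) by blast
qed

lemma conjugate_eq_one_iff:
  assumes "conjugate G x y" "x \<in> carrier G"
  shows "y = \<one> \<longleftrightarrow> x = \<one>"
proof -
  obtain h where "h \<in> carrier G" "y = h \<otimes> x \<otimes> inv h" using assms(1) unfolding conjugate_def by blast
  then show ?thesis using conj_eq_one_iff assms(2) by simp
qed

lemma conjugate_square_eq_one_iff:
  assumes "conjugate G x y" "x \<in> carrier G"
  shows "y \<otimes> y = \<one> \<longleftrightarrow> x \<otimes> x = \<one>"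
proof -
  obtain h where h: "h \<in> carrier G" "y = h \<otimes> x \<otimes> inv h" using assms(1) unfolding conjugate_def
    by blast
  then have "y \<otimes> y = h \<otimes> (x \<otimes> x) \<otimes> inv h" using conj_mult assms(2) by simp
  then show ?thesis using conj_eq_one_iff h(1) assms(2) by simp
qed

lemma conjugate_in_subgroup:
  assumes "subgroup H G" "conjugate (G\<lparr>carrier := H\<rparr>) x y"
  shows "conjugate G x y"
proof -
  obtain h where "h \<in> H" "y = h \<otimes> x \<otimes> inv\<^bsub>G\<lparr>carrier := H\<rparr>\<^esub> h"
    using assms(2) unfolding conjugate_def by auto
  then show ?thesis
    unfolding conjugate_def using m_inv_consistent[OF assms(1)] subgroup.subset[OF assms(1)] by auto
qed

lemma centraliser_conjugate:
  assumes h: "h \<in> carrier G" and x: "x \<in> carrier G"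
  shows "centraliser G (h \<otimes> x \<otimes> inv h) = (\<lambda>y. h \<otimes> y \<otimes> inv h) ` centraliser G x"
proof (intro equalityI subsetI)
  fix y assume "y \<in> centraliser G (h \<otimes> x \<otimes> inv h)"
  then have y: "y \<in> carrier G" "y \<otimes> (h \<otimes> x \<otimes> inv h) = (h \<otimes> x \<otimes> inv h) \<otimes> y"
    unfolding centraliser_def by auto
  define z where "z = inv h \<otimes> y \<otimes> h"
  have z: "z \<in> carrier G" "y = h \<otimes> z \<otimes> inv h"
    unfolding z_def using h y(1) by (simp_all add: conjugation_is_surj)
  then have "h \<otimes> (z \<otimes> x) \<otimes> inv h = h \<otimes> (x \<otimes> z) \<otimes> inv h"
    using y(2) h x by (simp add: conj_mult)
  then have "z \<in> centraliser G x" unfolding centraliser_def using z(1) h x by simp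
  then show "y \<in> (\<lambda>y. h \<otimes> y \<otimes> inv h) ` centraliser G x" using z(2) by blast
next
  fix y assume "y \<in> (\<lambda>y. h \<otimes> y \<otimes> inv h) ` centraliser G x"
  then obtain z where z: "z \<in> carrier G" "z \<otimes> x = x \<otimes> z" "y = h \<otimes> z \<otimes> inv h"
    unfolding centraliser_def by blast
  then show "y \<in> centraliser G (h \<otimes> x \<otimes> inv h)"
    unfolding centraliser_def using h x by (simp add: conj_mult)
qed

lemma generate_involution:
  assumes "w \<in> carrier G" "w \<otimes> w = \<one>"
  shows "generate G {w} = {\<one>, w}"
proof
  have inv_w: "inv w = w" using assms inv_char by blast
  show "generate G {w} \<subseteq> {\<one>, w}"
  proof
    fix x assume "x \<in> generate G {w}"
    then show "x \<in> {\<one>, w}"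
      by (induction rule: generate.induct) (use assms inv_w in auto)
  qed
  show "{\<one>, w} \<subseteq> generate G {w}" by (auto intro: generate.one generate.incl)
qed

end

subsection \<open>Odd dihedral groups\<close>

locale odd_dihedral = group W for W :: "('a, 'b) monoid_scheme" (structure) +
  fixes s t :: 'a and k :: nat
  assumes s_closed: "s \<in> carrier W" and t_closed: "t \<in> carrier W"
    and s_square: "s \<otimes> s = \<one>" and t_square: "t \<otimes> t = \<one>"
    and rotation_order: "(s \<otimes> t) [^] k = \<one>" and odd_k: "odd k"
begin

definition r :: 'a where "r = s \<otimes> t"

definition dihedral :: "'a set" where
  "dihedral = {r [^] (j::nat) | j. True} \<union> {r [^] (j::nat) \<otimes> s | j. True}"

lemma r_closed [simp]: "r \<in> carrier W"
  unfolding r_def using s_closed t_closed by simp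

lemma inv_s: "inv s = s"
  using s_closed s_square inv_char by blast

lemma s_cancel: "x \<in> carrier W \<Longrightarrow> s \<otimes> (s \<otimes> x) = x"
  using s_closed s_square by (simp add: m_assoc[symmetric])

lemma r_pow_multiple: "r [^] (k * j) = \<one>"
  using rotation_order r_closed unfolding r_def by (simp add: nat_pow_pow[symmetric])

lemma s_r_s: "s \<otimes> r \<otimes> s = inv r"
proof -
  have "inv r = t \<otimes> s"
    unfolding r_def using s_closed t_closed s_square t_square inv_char[of t t] inv_s
    by (simp add: inv_mult_group)
  then show ?thesis unfolding r_def using s_closed t_closed by (simp add: m_assoc s_cancel)
qed

lemma s_r_pow_s: "s \<otimes> r [^] (j::nat) \<otimes> s = inv (r [^] j)"
proof (induction j)
  case 0
  then show ?case using s_closed s_square by simp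
next
  case (Suc j)
  have "s \<otimes> r [^] Suc j \<otimes> s = (s \<otimes> r [^] j \<otimes> s) \<otimes> (s \<otimes> r \<otimes> s)"
    using s_closed by (simp add: m_assoc s_cancel)
  also have "\<dots> = inv (r \<otimes> r [^] j)" using Suc s_r_s by (simp add: inv_mult_group)
  finally show ?case using nat_pow_Suc2[of r j] by simp
qed

lemma inv_r_pow: "inv (r [^] (j::nat)) = r [^] ((k - 1) * j)"
proof (rule inv_equality)
  from odd_pos[OF odd_k] have "(k - 1) * j + j = k * j" by (cases k) auto
  then show "r [^] ((k - 1) * j) \<otimes> r [^] j = \<one>" by (simp add: nat_pow_mult r_pow_multiple)
qed simp_all

lemma s_r_pow: "s \<otimes> r [^] (j::nat) = r [^] ((k - 1) * j) \<otimes> s"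
proof -
  have "s \<otimes> r [^] j = (s \<otimes> r [^] j \<otimes> s) \<otimes> s" using s_closed by (simp add: m_assoc s_square)
  then show ?thesis using s_r_pow_s inv_r_pow by simp
qed

text \<open>Square roots of rotations exist because k is odd.\<close>

lemma r_pow_half_square: "r [^] (j * ((k + 1) div 2)) \<otimes> r [^] (j * ((k + 1) div 2)) = r [^] j"
proof -
  obtain q where "k = 2 * q + 1" using odd_k by (rule oddE)
  then have "j * ((k + 1) div 2) + j * ((k + 1) div 2) = j + k * j" by (simp add: algebra_simps)
  then have "r [^] (j * ((k + 1) div 2)) \<otimes> r [^] (j * ((k + 1) div 2)) = r [^] j \<otimes> r [^] (k * j)"
    by (simp add: nat_pow_mult)
  then show ?thesis by (simp add: r_pow_multiple)
qed

lemma r_pow_square_eq_one: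
  assumes "r [^] (j::nat) \<otimes> r [^] j = \<one>"
  shows "r [^] j = \<one>"
proof -
  have "r [^] j = (r [^] j \<otimes> r [^] j) [^] ((k + 1) div 2)"
    using r_pow_half_square[of j] by (simp add: nat_pow_mult nat_pow_pow add_mult_distrib)
  then show ?thesis using assms by simp
qed

lemma dihedral_cases:
  assumes "d \<in> dihedral"
  obtains (rotation) j :: nat where "d = r [^] j" | (reflection) j :: nat where "d = r [^] j \<otimes> s"
  using assms unfolding dihedral_def by blast

lemma rotation_in_dihedral: "r [^] (j::nat) \<in> dihedral"
  unfolding dihedral_def by blast

lemma reflection_in_dihedral: "r [^] (j::nat) \<otimes> s \<in> dihedral"
  unfolding dihedral_def by blast

lemma rotation_mult_reflection: "r [^] (i::nat) \<otimes> (r [^] (j::nat) \<otimes> s) = r [^] (i + j) \<otimes> s"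
  using s_closed by (simp add: m_assoc[symmetric] nat_pow_mult)

lemma reflection_mult_rotation:
  "(r [^] (i::nat) \<otimes> s) \<otimes> r [^] (j::nat) = r [^] (i + (k - 1) * j) \<otimes> s"
  using s_closed rotation_mult_reflection by (simp add: m_assoc s_r_pow)

lemma reflection_mult_reflection:
  "(r [^] (i::nat) \<otimes> s) \<otimes> (r [^] (j::nat) \<otimes> s) = r [^] (i + (k - 1) * j)"
proof -
  have "(r [^] i \<otimes> s) \<otimes> (r [^] j \<otimes> s) = ((r [^] i \<otimes> s) \<otimes> r [^] j) \<otimes> s"
    using s_closed by (simp add: m_assoc)
  then show ?thesis using s_closed reflection_mult_rotation by (simp add: m_assoc s_square)
qed

lemma subgroup_dihedral: "subgroup dihedral W"
proof (rule subgroupI)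
  show "dihedral \<subseteq> carrier W" unfolding dihedral_def using s_closed by auto
  show "dihedral \<noteq> {}" using rotation_in_dihedral by blast
next
  fix a assume "a \<in> dihedral"
  then show "inv a \<in> dihedral"
  proof (cases rule: dihedral_cases)
    case (rotation j)
    then show ?thesis using inv_r_pow rotation_in_dihedral by simp
  next
    case (reflection j)
    then have "inv a = s \<otimes> r [^] ((k - 1) * j)"
      using s_closed inv_s inv_r_pow by (simp add: inv_mult_group)
    then show ?thesis using s_r_pow reflection_in_dihedral by simp
  qed
next
  fix a b assume ab: "a \<in> dihedral" "b \<in> dihedral"
  from ab(1) show "a \<otimes> b \<in> dihedral"
  proof (cases rule: dihedral_cases)
    case a: (rotation i)
    from ab(2) show ?thesis
    proof (cases rule: dihedral_cases)
      case (rotation j)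
      show ?thesis unfolding a rotation nat_pow_mult[OF r_closed] by (rule rotation_in_dihedral)
    next
      case (reflection j)
      show ?thesis unfolding a reflection rotation_mult_reflection by (rule reflection_in_dihedral)
    qed
  next
    case a: (reflection i)
    from ab(2) show ?thesis
    proof (cases rule: dihedral_cases)
      case (rotation j)
      show ?thesis unfolding a rotation reflection_mult_rotation by (rule reflection_in_dihedral)
    next
      case (reflection j)
      show ?thesis unfolding a reflection reflection_mult_reflection by (rule rotation_in_dihedral)
    qed
  qed
qed

lemma s_in_dihedral: "s \<in> dihedral"
  using reflection_in_dihedral[of 0] s_closed by simp

lemma t_in_dihedral: "t \<in> dihedral"
proof -
  have "t = s \<otimes> r" unfolding r_def using t_closed by (simp add: s_cancel)
  also have "\<dots> = r [^] ((k - 1) * 1) \<otimes> s" using s_r_pow[of 1] by simp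
  finally show ?thesis by (rule forw_subst) (rule reflection_in_dihedral)
qed

lemma generate_subset_dihedral: "generate W {s, t} \<subseteq> dihedral"
  by (rule generate_subgroup_incl[OF _ subgroup_dihedral]) (simp add: s_in_dihedral t_in_dihedral)

lemma r_pow_commutes_s:
  assumes "r [^] (j::nat) \<otimes> s = s \<otimes> r [^] j"
  shows "r [^] j = \<one>"
proof -
  have "inv (r [^] j) = r [^] j"
    using s_r_pow_s[of j] assms s_closed by (simp add: m_assoc s_cancel)
  then show ?thesis using r_pow_square_eq_one r_inv[of "r [^] j"] by simp
qed

lemma dihedral_centraliser_s:
  assumes "d \<in> dihedral" "d \<otimes> s = s \<otimes> d"
  shows "d = \<one> \<or> d = s"
  using assms(1)
proof (cases rule: dihedral_cases)
  case (rotation j)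
  then show ?thesis using assms(2) r_pow_commutes_s by simp
next
  case (reflection j)
  then have "r [^] j = s \<otimes> (r [^] j \<otimes> s)"
    using assms(2) s_closed by (simp add: m_assoc s_square)
  then have "r [^] j \<otimes> s = s \<otimes> (r [^] j \<otimes> s) \<otimes> s" by (rule arg_cong)
  also have "\<dots> = s \<otimes> r [^] j" using s_closed by (simp add: m_assoc s_square)
  finally have "r [^] j \<otimes> s = s \<otimes> r [^] j" .
  then show ?thesis using reflection r_pow_commutes_s s_closed by simp
qed

lemma dihedral_involution_conjugate:
  assumes "d \<in> dihedral" "d \<otimes> d = \<one>" "d \<noteq> \<one>"
  shows "conjugate W s d"
  using assms(1)
proof (cases rule: dihedral_cases)
  case (rotation j)
  then show ?thesis using assms(2,3) r_pow_square_eq_one by simp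
next
  case (reflection j)
  define h where "h = r [^] (j * ((k + 1) div 2))"
  have h: "h \<in> carrier W" unfolding h_def by simp
  have "s \<otimes> inv h = s \<otimes> (s \<otimes> h \<otimes> s)" using s_r_pow_s unfolding h_def by simp
  also have "\<dots> = h \<otimes> s" using h s_closed by (simp add: m_assoc s_cancel)
  finally have "s \<otimes> inv h = h \<otimes> s" .
  then have "h \<otimes> s \<otimes> inv h = h \<otimes> h \<otimes> s" using h s_closed by (simp add: m_assoc)
  also have "\<dots> = d" unfolding h_def using r_pow_half_square reflection by simp
  finally show ?thesis unfolding conjugate_def using h by blast
qed

end

subsection \<open>Normal forms in amalgamated products\<close>

locale amalgam_forms = group W for W :: "('a, 'b) monoid_scheme" (structure) +
  fixes A D :: "'a set" and c :: 'a
  assumes subgroup_A: "subgroup A W" and subgroup_D: "subgroup D W"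
    and c_in_A: "c \<in> A" and c_in_D: "c \<in> D" and c_square: "c \<otimes> c = \<one>" and c_ne_one: "c \<noteq> \<one>"
begin

text \<open>A normal form (e, [(t1, a1), ..., (tn, an)]) stands for the product c^e a1 ... an, where
  the a_i are fixed representatives of right cosets {a, c a} outside C = {1, c}, taken
  alternately from A (side True) and D (side False).\<close>

definition amalgamated :: "'a set" where "amalgamated = {\<one>, c}"

definition factor :: "bool \<Rightarrow> 'a set" where "factor t = (if t then A else D)"

definition cpow :: "bool \<Rightarrow> 'a" where "cpow e = (if e then c else \<one>)"

definition coset_rep :: "'a \<Rightarrow> 'a" where
  "coset_rep a = (if a \<in> amalgamated then \<one> else (SOME x. x \<in> {a, c \<otimes> a}))"

definition coset_sign :: "'a \<Rightarrow> bool" where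
  "coset_sign a = (if a \<in> amalgamated then a \<noteq> \<one> else a \<noteq> coset_rep a)"

definition normal_word :: "(bool \<times> 'a) list \<Rightarrow> bool" where
  "normal_word xs \<longleftrightarrow> successively (\<lambda>x y. fst x \<noteq> fst y) xs \<and>
     (\<forall>x\<in>set xs. snd x \<in> factor (fst x) \<and> snd x \<notin> amalgamated \<and> coset_rep (snd x) = snd x)"

definition normal_forms :: "(bool \<times> (bool \<times> 'a) list) set" where
  "normal_forms = {x. normal_word (snd x)}"

definition normal_tails :: "bool \<Rightarrow> (bool \<times> 'a) list set" where
  "normal_tails t = {ys. normal_word ys \<and> (ys \<noteq> [] \<longrightarrow> fst (hd ys) \<noteq> t)}"

definition split_form :: "bool \<Rightarrow> bool \<times> (bool \<times> 'a) list \<Rightarrow> 'a \<times> (bool \<times> 'a) list" where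
  "split_form t x = (case snd x of
      [] \<Rightarrow> (cpow (fst x), [])
    | y # ys \<Rightarrow> (if fst y = t then (cpow (fst x) \<otimes> snd y, ys) else (cpow (fst x), snd x)))"

definition join_form :: "bool \<Rightarrow> 'a \<Rightarrow> (bool \<times> 'a) list \<Rightarrow> bool \<times> (bool \<times> 'a) list" where
  "join_form t a ys = (coset_sign a, if a \<in> amalgamated then ys else (t, coset_rep a) # ys)"

definition act :: "bool \<Rightarrow> 'a \<Rightarrow> bool \<times> (bool \<times> 'a) list \<Rightarrow> bool \<times> (bool \<times> 'a) list" where
  "act t a x = join_form t (a \<otimes> fst (split_form t x)) (snd (split_form t x))"

definition word_prod :: "(bool \<times> 'a) list \<Rightarrow> 'a" where
  "word_prod xs = foldr (\<lambda>y acc. snd y \<otimes> acc) xs \<one>"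

definition form_value :: "bool \<times> (bool \<times> 'a) list \<Rightarrow> 'a" where
  "form_value x = cpow (fst x) \<otimes> word_prod (snd x)"

lemma c_closed: "c \<in> carrier W"
  using subgroup.subset[OF subgroup_A] c_in_A by blast

lemma subgroup_factor: "subgroup (factor t) W"
  unfolding factor_def using subgroup_A subgroup_D by simp

lemma factor_closed: "a \<in> factor t \<Longrightarrow> a \<in> carrier W"
  using subgroup.subset[OF subgroup_factor] by blast

lemma c_factor: "c \<in> factor t"
  unfolding factor_def using c_in_A c_in_D by simp

lemma one_factor: "\<one> \<in> factor t"
  by (rule subgroup.one_closed[OF subgroup_factor])

lemma m_factor: "a \<in> factor t \<Longrightarrow> b \<in> factor t \<Longrightarrow> a \<otimes> b \<in> factor t"
  by (rule subgroup.m_closed[OF subgroup_factor])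

lemma inv_factor: "a \<in> factor t \<Longrightarrow> inv a \<in> factor t"
  by (rule subgroup.m_inv_closed[OF subgroup_factor])

lemma cpow_factor: "cpow e \<in> factor t"
  unfolding cpow_def using c_factor one_factor by simp

lemma cpow_closed: "cpow e \<in> carrier W"
  unfolding cpow_def using c_closed by simp

lemma cpow_amalgamated: "cpow e \<in> amalgamated"
  unfolding cpow_def amalgamated_def by simp

lemma cpow_neg: "c \<otimes> cpow e = cpow (\<not> e)"
  unfolding cpow_def using c_square c_closed by simp

lemma cpow_coset_sign: "z \<in> amalgamated \<Longrightarrow> cpow (coset_sign z) = z"
  unfolding cpow_def coset_sign_def amalgamated_def by auto

lemma coset_sign_cpow: "coset_sign (cpow e) = e"
  unfolding cpow_def coset_sign_def amalgamated_def using c_ne_one by auto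

lemma c_cancel: "a \<in> carrier W \<Longrightarrow> c \<otimes> (c \<otimes> a) = a"
  using c_closed c_square by (simp add: m_assoc[symmetric])

lemma amalgamated_closed: "z \<in> amalgamated \<Longrightarrow> z \<in> carrier W"
  unfolding amalgamated_def using c_closed by auto

lemma amalgamated_factor: "z \<in> amalgamated \<Longrightarrow> z \<in> factor t"
  unfolding amalgamated_def using c_factor one_factor by auto

lemma amalgamated_mult: "x \<in> amalgamated \<Longrightarrow> y \<in> amalgamated \<Longrightarrow> x \<otimes> y \<in> amalgamated"
  unfolding amalgamated_def using c_closed c_square by auto

lemma amalgamated_square: "z \<in> amalgamated \<Longrightarrow> z \<otimes> z = \<one>"
  unfolding amalgamated_def using c_square by auto

lemma amalgamated_mult_iff:
  assumes "z \<in> amalgamated" "a \<in> carrier W"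
  shows "z \<otimes> a \<in> amalgamated \<longleftrightarrow> a \<in> amalgamated"
proof
  have "z \<otimes> (z \<otimes> a) = a"
    using assms amalgamated_square amalgamated_closed by (simp add: m_assoc[symmetric])
  moreover assume "z \<otimes> a \<in> amalgamated"
  ultimately show "a \<in> amalgamated" using amalgamated_mult[OF assms(1), of "z \<otimes> a"] by simp
qed (rule amalgamated_mult[OF assms(1)])

lemma amalgamated_mult_right_iff:
  assumes "z \<in> amalgamated" "a \<in> carrier W"
  shows "a \<otimes> z \<in> amalgamated \<longleftrightarrow> a \<in> amalgamated"
proof
  have "(a \<otimes> z) \<otimes> z = a"
    using assms amalgamated_square amalgamated_closed by (simp add: m_assoc)
  moreover assume "a \<otimes> z \<in> amalgamated"
  ultimately show "a \<in> amalgamated" using amalgamated_mult[OF _ assms(1), of "a \<otimes> z"] by simp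
qed (rule amalgamated_mult[OF _ assms(1)])

lemma c_mult_ne: "a \<in> carrier W \<Longrightarrow> c \<otimes> a \<noteq> a"
  using c_closed c_ne_one by simp

lemma c_mult_notin: "a \<notin> amalgamated \<Longrightarrow> a \<in> carrier W \<Longrightarrow> c \<otimes> a \<notin> amalgamated"
  using amalgamated_mult_iff[of c a] unfolding amalgamated_def by auto

lemma coset_rep_in: "a \<notin> amalgamated \<Longrightarrow> coset_rep a \<in> {a, c \<otimes> a}"
  unfolding coset_rep_def using someI[of "\<lambda>x. x \<in> {a, c \<otimes> a}" a] by simp

lemma coset_rep_c:
  assumes "a \<notin> amalgamated" "a \<in> carrier W"
  shows "coset_rep (c \<otimes> a) = coset_rep a"
proof -
  have "{c \<otimes> a, c \<otimes> (c \<otimes> a)} = {a, c \<otimes> a}" using c_cancel[OF assms(2)] by auto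
  then show ?thesis unfolding coset_rep_def using c_mult_notin[OF assms] assms(1) by simp
qed

lemma coset_rep_cpow:
  assumes "a \<notin> amalgamated" "a \<in> carrier W"
  shows "coset_rep (cpow e \<otimes> a) = coset_rep a"
  using coset_rep_c[OF assms] assms unfolding cpow_def by auto

lemma coset_rep_factor: "a \<in> factor t \<Longrightarrow> coset_rep a \<in> factor t"
  using coset_rep_in[of a] c_factor m_factor one_factor unfolding coset_rep_def
  by (cases "a \<in> amalgamated") auto

lemma coset_rep_notin:
  assumes "a \<notin> amalgamated" "a \<in> carrier W"
  shows "coset_rep a \<notin> amalgamated"
  using coset_rep_in[OF assms(1)] c_mult_notin[OF assms] assms(1) by auto

lemma coset_rep_idem:
  assumes "a \<notin> amalgamated" "a \<in> carrier W"
  shows "coset_rep (coset_rep a) = coset_rep a"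
  using coset_rep_in[OF assms(1)] coset_rep_c[OF assms] by auto

lemma cpow_coset_sign_rep:
  assumes "a \<in> carrier W"
  shows "cpow (coset_sign a) \<otimes> coset_rep a = a"
proof (cases "a \<in> amalgamated")
  case True
  then show ?thesis unfolding coset_sign_def coset_rep_def cpow_def amalgamated_def using c_closed
    by auto
next
  case False
  then consider "coset_rep a = a" | "coset_rep a = c \<otimes> a" using coset_rep_in by blast
  then show ?thesis
    using False assms c_cancel c_mult_ne[OF assms] unfolding coset_sign_def cpow_def by cases auto
qed

lemma coset_sign_cpow_rep:
  assumes "r \<notin> amalgamated" "r \<in> carrier W" "coset_rep r = r"
  shows "coset_sign (cpow e \<otimes> r) = e"
proof -
  have "cpow e \<otimes> r \<notin> amalgamated" using amalgamated_mult_iff[OF cpow_amalgamated assms(2)] assms(1)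
    by simp
  moreover have "coset_rep (cpow e \<otimes> r) = r" using coset_rep_cpow[OF assms(1,2)] assms(3) by simp
  ultimately show ?thesis
    unfolding coset_sign_def using c_mult_ne[OF assms(2)] assms(2) by (simp add: cpow_def)
qed

lemma normal_word_Cons:
  "normal_word (y # ys) \<longleftrightarrow> normal_word ys \<and> (ys \<noteq> [] \<longrightarrow> fst y \<noteq> fst (hd ys)) \<and>
     snd y \<in> factor (fst y) \<and> snd y \<notin> amalgamated \<and> coset_rep (snd y) = snd y"
  unfolding normal_word_def successively_Cons by auto

lemma split_form_in:
  assumes "x \<in> normal_forms"
  shows "fst (split_form t x) \<in> factor t" "snd (split_form t x) \<in> normal_tails t"
proof -
  obtain e xs where x: "x = (e, xs)" by (cases x)
  have ok: "normal_word xs" using assms x unfolding normal_forms_def by simp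
  have "fst (split_form t x) \<in> factor t \<and> snd (split_form t x) \<in> normal_tails t"
  proof (cases xs)
    case Nil then show ?thesis unfolding split_form_def x normal_tails_def using cpow_factor
      by (simp add: normal_word_def)
  next
    case (Cons y ys)
    show ?thesis
    proof (cases "fst y = t")
      case True
      then have "snd y \<in> factor t" using ok Cons normal_word_Cons by blast
      then have "cpow e \<otimes> snd y \<in> factor t" using cpow_factor m_factor by blast
      moreover have "ys \<in> normal_tails t"
      proof -
        have o2: "normal_word (y # ys)" using ok Cons by simp
        then have "normal_word ys \<and> (ys \<noteq> [] \<longrightarrow> fst y \<noteq> fst (hd ys))" by (simp add: normal_word_Cons)
        then show ?thesis unfolding normal_tails_def using True by auto
      qed
      ultimately show ?thesis unfolding split_form_def x using Cons True by simp
    next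
      case False
      then show ?thesis unfolding split_form_def x normal_tails_def using Cons ok cpow_factor
        by simp
    qed
  qed
  then show "fst (split_form t x) \<in> factor t" "snd (split_form t x) \<in> normal_tails t" by auto
qed

lemma join_split_form:
  assumes "x \<in> normal_forms"
  shows "join_form t (fst (split_form t x)) (snd (split_form t x)) = x"
proof -
  obtain e xs where x: "x = (e, xs)" by (cases x)
  have ok: "normal_word xs" using assms x unfolding normal_forms_def by simp
  show ?thesis
  proof (cases "xs \<noteq> [] \<and> fst (hd xs) = t")
    case True
    then obtain y ys where Cons: "xs = y # ys" "fst y = t" by (cases xs) auto
    have y: "snd y \<in> factor t" "snd y \<notin> amalgamated" "coset_rep (snd y) = snd y"
      using ok Cons normal_word_Cons by auto
    have yc: "snd y \<in> carrier W" using y factor_closed by blast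
    have n: "cpow e \<otimes> snd y \<notin> amalgamated" using amalgamated_mult_iff[OF cpow_amalgamated yc] y
      by simp
    have "coset_rep (cpow e \<otimes> snd y) = snd y" using coset_rep_cpow[OF y(2) yc] y(3) by simp
    moreover have "coset_sign (cpow e \<otimes> snd y) = e" using coset_sign_cpow_rep[OF y(2) yc y(3)] .
    ultimately show ?thesis unfolding split_form_def join_form_def x using Cons n by (cases y) simp
  next
    case False
    then have d: "split_form t x = (cpow e, xs)" unfolding split_form_def x by (cases xs) auto
    show ?thesis unfolding d join_form_def using cpow_amalgamated coset_sign_cpow x by simp
  qed
qed

lemma split_join_form:
  assumes "a \<in> factor t" "ys \<in> normal_tails t"
  shows "split_form t (join_form t a ys) = (a, ys)"
proof (cases "a \<in> amalgamated")
  case True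
  then have "join_form t a ys = (coset_sign a, ys)" unfolding join_form_def by simp
  moreover have "\<not> (ys \<noteq> [] \<and> fst (hd ys) = t)" using assms(2) unfolding normal_tails_def by auto
  ultimately show ?thesis unfolding split_form_def using cpow_coset_sign[OF True] by (cases ys) auto
next
  case False
  then have "join_form t a ys = (coset_sign a, (t, coset_rep a) # ys)" unfolding join_form_def
    by simp
  then show ?thesis unfolding split_form_def
    using cpow_coset_sign_rep[OF factor_closed[OF assms(1)]] by simp
qed

lemma join_form_normal:
  assumes "a \<in> factor t" "ys \<in> normal_tails t"
  shows "join_form t a ys \<in> normal_forms"
proof (cases "a \<in> amalgamated")
  case True
  then show ?thesis unfolding join_form_def normal_forms_def using assms(2)
    unfolding normal_tails_def by simp
next
  case False
  have ac: "a \<in> carrier W" using assms(1) factor_closed by blast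
  have "normal_word ((t, coset_rep a) # ys)" unfolding normal_word_Cons
    using assms(2) coset_rep_factor[OF assms(1)] coset_rep_notin[OF False ac] coset_rep_idem[OF False ac]
    unfolding normal_tails_def by auto
  then show ?thesis unfolding join_form_def normal_forms_def using False by simp
qed

lemma act_closed: "a \<in> factor t \<Longrightarrow> x \<in> normal_forms \<Longrightarrow> act t a x \<in> normal_forms"
  unfolding act_def using split_form_in join_form_normal m_factor by blast

lemma act_mult: assumes "a \<in> factor t" "b \<in> factor t" "x \<in> normal_forms"
  shows "act t (a \<otimes> b) x = act t a (act t b x)"
proof -
  have d1: "fst (split_form t x) \<in> factor t" "snd (split_form t x) \<in> normal_tails t"
    using split_form_in[OF assms(3)] by auto
  have "split_form t (act t b x) = (b \<otimes> fst (split_form t x), snd (split_form t x))"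
    unfolding act_def by (rule split_join_form[OF m_factor[OF assms(2) d1(1)] d1(2)])
  then show ?thesis unfolding act_def
    using m_assoc factor_closed assms d1 by simp
qed

lemma act_one:
  assumes "x \<in> normal_forms"
  shows "act t \<one> x = x"
proof -
  have "fst (split_form t x) \<in> carrier W" using split_form_in(1)[OF assms] by (rule factor_closed)
  then show ?thesis unfolding act_def using join_split_form[OF assms] by simp
qed

lemma act_c:
  assumes "x \<in> normal_forms"
  shows "act t c x = (\<not> fst x, snd x)"
proof -
  obtain e xs where x: "x = (e, xs)" by (cases x)
  have ok: "normal_word xs" using assms x unfolding normal_forms_def by simp
  show ?thesis
  proof (cases "xs \<noteq> [] \<and> fst (hd xs) = t")
    case True
    then obtain y ys where Cons: "xs = y # ys" "fst y = t" by (cases xs) auto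
    have y: "snd y \<in> factor t" "snd y \<notin> amalgamated" "coset_rep (snd y) = snd y"
      using ok Cons normal_word_Cons by auto
    have yc: "snd y \<in> carrier W" using y factor_closed by blast
    have e: "c \<otimes> (cpow e \<otimes> snd y) = cpow (\<not> e) \<otimes> snd y"
      using c_closed cpow_closed yc by (simp add: m_assoc[symmetric] cpow_neg)
    have n: "cpow (\<not>e) \<otimes> snd y \<notin> amalgamated" using amalgamated_mult_iff[OF cpow_amalgamated yc] y
      by simp
    have "coset_rep (cpow (\<not>e) \<otimes> snd y) = snd y" using coset_rep_cpow[OF y(2) yc] y(3) by simp
    moreover have "coset_sign (cpow (\<not>e) \<otimes> snd y) = (\<not>e)"
      using coset_sign_cpow_rep[OF y(2) yc y(3)] .
    ultimately show ?thesis unfolding act_def split_form_def join_form_def x using Cons n e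
      by (cases y) simp
  next
    case False
    then have d: "split_form t x = (cpow e, xs)" unfolding split_form_def x by (cases xs) auto
    have "c \<otimes> cpow e = cpow (\<not> e)" by (rule cpow_neg)
    then show ?thesis unfolding act_def d join_form_def using cpow_amalgamated coset_sign_cpow x
      by simp
  qed
qed

lemma word_prod_closed: "\<forall>y\<in>set xs. snd y \<in> carrier W \<Longrightarrow> word_prod xs \<in> carrier W"
  unfolding word_prod_def by (induction xs) auto

lemma normal_word_closed: "normal_word xs \<Longrightarrow> \<forall>y\<in>set xs. snd y \<in> carrier W"
  unfolding normal_word_def using factor_closed by blast

lemma word_prod_Cons: "word_prod (y # ys) = snd y \<otimes> word_prod ys"
  unfolding word_prod_def by simp

lemma form_value_split:
  assumes "x \<in> normal_forms"
  shows "form_value x = fst (split_form t x) \<otimes> word_prod (snd (split_form t x))"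
proof -
  obtain e xs where x: "x = (e, xs)" by (cases x)
  have ok: "normal_word xs" using assms x unfolding normal_forms_def by simp
  show ?thesis
  proof (cases "xs \<noteq> [] \<and> fst (hd xs) = t")
    case True
    then obtain y ys where Cons: "xs = y # ys" "fst y = t" by (cases xs) auto
    have yc: "snd y \<in> carrier W" "word_prod ys \<in> carrier W"
      using ok Cons normal_word_Cons factor_closed word_prod_closed normal_word_closed by auto
    show ?thesis unfolding form_value_def split_form_def x using Cons yc cpow_closed
      by (simp add: word_prod_Cons m_assoc)
  next
    case False
    then have d: "split_form t (e, xs) = (cpow e, xs)" unfolding split_form_def by (cases xs) auto
    show ?thesis unfolding form_value_def x d by simp
  qed
qed

lemma form_value_join:
  assumes "a \<in> factor t" "ys \<in> normal_tails t"
  shows "form_value (join_form t a ys) = a \<otimes> word_prod ys"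
proof -
  have "form_value (join_form t a ys) =
      fst (split_form t (join_form t a ys)) \<otimes> word_prod (snd (split_form t (join_form t a ys)))"
    by (rule form_value_split[OF join_form_normal[OF assms]])
  then show ?thesis using split_join_form[OF assms] by simp
qed

lemma form_value_act:
  assumes "a \<in> factor t" "x \<in> normal_forms"
  shows "form_value (act t a x) = a \<otimes> form_value x"
proof -
  have d1: "fst (split_form t x) \<in> factor t" "snd (split_form t x) \<in> normal_tails t"
    using split_form_in[OF assms(2)] by auto
  have ok: "normal_word (snd (split_form t x))" using d1 unfolding normal_tails_def by simp
  have "form_value (act t a x) = (a \<otimes> fst (split_form t x)) \<otimes> word_prod (snd (split_form t x))"
    unfolding act_def by (rule form_value_join[OF m_factor[OF assms(1) d1(1)] d1(2)])
  also have "\<dots> = a \<otimes> form_value x" unfolding form_value_split[OF assms(2), of t]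
    using m_assoc factor_closed assms d1 word_prod_closed[OF normal_word_closed[OF ok]] by simp
  finally show ?thesis .
qed

lemma act_extends_word:
  assumes "a \<in> factor t" "a \<notin> amalgamated" "ys \<in> normal_tails t"
  shows "act t a (e, ys) = (coset_sign (a \<otimes> cpow e), (t, coset_rep (a \<otimes> cpow e)) # ys)"
proof -
  have "split_form t (e, ys) = (cpow e, ys)" using assms(3)
    unfolding split_form_def normal_tails_def by (cases ys) auto
  moreover have "a \<otimes> cpow e \<notin> amalgamated"
    using amalgamated_mult_right_iff[OF cpow_amalgamated factor_closed[OF assms(1)]] assms(2)
    by simp
  ultimately show ?thesis unfolding act_def join_form_def by simp
qed

definition alternating :: "(bool \<times> 'a) list \<Rightarrow> bool" where
  "alternating gs \<longleftrightarrow> successively (\<lambda>a b. fst a \<noteq> fst b) gs \<and>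
     (\<forall>y\<in>set gs. snd y \<in> factor (fst y) \<and> snd y \<notin> amalgamated)"

lemma alternating_append:
  "alternating (gs @ hs) \<longleftrightarrow>
     alternating gs \<and> alternating hs \<and> (gs \<noteq> [] \<longrightarrow> hs \<noteq> [] \<longrightarrow> fst (last gs) \<noteq> fst (hd hs))"
  unfolding alternating_def successively_append_iff set_append ball_Un by blast

lemma alternating_Cons:
  "alternating (y # ys) \<longleftrightarrow> snd y \<in> factor (fst y) \<and> snd y \<notin> amalgamated \<and>
     alternating ys \<and> (ys \<noteq> [] \<longrightarrow> fst y \<noteq> fst (hd ys))"
  using alternating_append[of "[y]" ys] unfolding alternating_def by auto

lemma alternating_snoc:
  "alternating (gs @ [y]) \<longleftrightarrow> alternating gs \<and> snd y \<in> factor (fst y) \<and> snd y \<notin> amalgamated \<and>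
     (gs \<noteq> [] \<longrightarrow> fst (last gs) \<noteq> fst y)"
  using alternating_append[of gs "[y]"] unfolding alternating_def by auto

lemma alternating_closed: "alternating gs \<Longrightarrow> \<forall>y\<in>set gs. snd y \<in> carrier W"
  unfolding alternating_def using factor_closed by blast

lemma word_prod_append:
  "\<forall>y\<in>set gs. snd y \<in> carrier W \<Longrightarrow> \<forall>y\<in>set hs. snd y \<in> carrier W \<Longrightarrow>
     word_prod (gs @ hs) = word_prod gs \<otimes> word_prod hs"
proof (induction gs)
  case Nil
  then show ?case using word_prod_closed by (simp add: word_prod_def)
next
  case (Cons y gs)
  then show ?case using word_prod_closed by (simp add: word_prod_Cons m_assoc)
qed

lemma word_prod_snoc:
  "\<forall>y\<in>set gs. snd y \<in> carrier W \<Longrightarrow> snd y \<in> carrier W \<Longrightarrow> word_prod (gs @ [y]) = word_prod gs \<otimes> snd y"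
  using word_prod_append[of gs "[y]"] by (simp add: word_prod_def)

definition inv_word :: "(bool \<times> 'a) list \<Rightarrow> (bool \<times> 'a) list" where
  "inv_word gs = rev (map (\<lambda>y. (fst y, inv (snd y))) gs)"

lemma inv_notin_amalgamated:
  assumes "a \<in> carrier W" "a \<notin> amalgamated"
  shows "inv a \<notin> amalgamated"
proof
  assume "inv a \<in> amalgamated"
  moreover have "inv c = c" using c_closed c_square inv_char by blast
  ultimately have "inv (inv a) \<in> amalgamated" unfolding amalgamated_def by auto
  then show False using assms by simp
qed

lemma alternating_inv_word:
  assumes "alternating gs"
  shows "alternating (inv_word gs)"
proof -
  have "successively (\<lambda>a b. fst a \<noteq> fst b) gs" using assms unfolding alternating_def by simp
  then have "successively (\<lambda>a b. fst a \<noteq> fst b) (inv_word gs)"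
    unfolding inv_word_def successively_rev successively_map by (rule successively_mono) simp
  moreover have "snd y \<in> factor (fst y) \<and> snd y \<notin> amalgamated" if "y \<in> set (inv_word gs)" for y
  proof -
    have "y \<in> (\<lambda>z. (fst z, inv (snd z))) ` set gs" using that unfolding inv_word_def by simp
    then obtain z where z: "z \<in> set gs" "y = (fst z, inv (snd z))" by blast
    then have "snd z \<in> factor (fst z)" "snd z \<notin> amalgamated" using assms unfolding alternating_def
      by auto
    then show ?thesis using z(2) inv_factor inv_notin_amalgamated factor_closed by simp
  qed
  ultimately show ?thesis unfolding alternating_def by blast
qed

lemma word_prod_inv_word: "alternating gs \<Longrightarrow> word_prod (inv_word gs) = inv (word_prod gs)"
proof (induction gs)
  case Nil
  then show ?case by (simp add: inv_word_def word_prod_def)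
next
  case (Cons y gs)
  have gs: "alternating gs" "snd y \<in> carrier W"
    using Cons.prems factor_closed unfolding alternating_Cons by auto
  have gsC: "word_prod gs \<in> carrier W" by (rule word_prod_closed[OF alternating_closed[OF gs(1)]])
  have "inv_word (y # gs) = inv_word gs @ [(fst y, inv (snd y))]" by (simp add: inv_word_def)
  then have "word_prod (inv_word (y # gs)) = word_prod (inv_word gs) \<otimes> inv (snd y)"
    using word_prod_snoc[OF alternating_closed[OF alternating_inv_word[OF gs(1)]]] gs(2) by simp
  also have "word_prod (inv_word gs) = inv (word_prod gs)" by (rule Cons.IH[OF gs(1)])
  also have "inv (word_prod gs) \<otimes> inv (snd y) = inv (snd y \<otimes> word_prod gs)"
    using gsC gs(2) by (simp add: inv_mult_group)
  finally show ?case by (simp add: word_prod_Cons)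
qed

lemma hd_inv_word: "gs \<noteq> [] \<Longrightarrow> fst (hd (inv_word gs)) = fst (last gs)"
  unfolding inv_word_def by (simp add: hd_rev last_map)

lemma alternating_conjugate_word:
  assumes "alternating (gs @ [(t, a)])" "z \<in> factor t" "z \<notin> amalgamated"
  shows "alternating ((gs @ [(t, z)]) @ inv_word gs)"
    and "word_prod ((gs @ [(t, z)]) @ inv_word gs) = word_prod gs \<otimes> z \<otimes> inv (word_prod gs)"
proof -
  have gs: "alternating gs" "gs \<noteq> [] \<longrightarrow> fst (last gs) \<noteq> t" using assms(1) unfolding alternating_snoc
    by auto
  have gsz: "alternating (gs @ [(t, z)])" unfolding alternating_snoc using gs assms(2,3) by simp
  have inv: "alternating (inv_word gs)" by (rule alternating_inv_word[OF gs(1)])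
  show "alternating ((gs @ [(t, z)]) @ inv_word gs)"
  proof (rule alternating_append[THEN iffD2], intro conjI impI)
    assume "inv_word gs \<noteq> []"
    then have "gs \<noteq> []" unfolding inv_word_def by auto
    then show "fst (last (gs @ [(t, z)])) \<noteq> fst (hd (inv_word gs))" using gs(2) hd_inv_word by simp
  qed (use gsz inv in auto)
  have zC: "z \<in> carrier W" by (rule factor_closed[OF assms(2)])
  have "word_prod ((gs @ [(t, z)]) @ inv_word gs) =
      word_prod (gs @ [(t, z)]) \<otimes> word_prod (inv_word gs)"
    by (rule word_prod_append[OF alternating_closed[OF gsz] alternating_closed[OF inv]])
  also have "\<dots> = word_prod gs \<otimes> z \<otimes> inv (word_prod gs)"
    using word_prod_snoc[OF alternating_closed[OF gs(1)], of "(t, z)"] zC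
      word_prod_inv_word[OF gs(1)]
    by simp
  finally show "word_prod ((gs @ [(t, z)]) @ inv_word gs) = word_prod gs \<otimes> z \<otimes> inv (word_prod gs)" .
qed

lemma alternating_times_factor:
  assumes alt: "alternating gs" "gs \<noteq> []" "fst (last gs) \<noteq> t" and z: "z \<in> factor t"
  obtains gs' where "gs' \<noteq> []" "alternating gs'" "length gs' \<le> Suc (length gs)"
    "word_prod gs' = word_prod gs \<otimes> z"
proof (cases "z \<in> amalgamated")
  case False
  have "alternating (gs @ [(t, z)])" unfolding alternating_snoc using alt z False by simp
  moreover have "word_prod (gs @ [(t, z)]) = word_prod gs \<otimes> z"
    using word_prod_snoc[OF alternating_closed[OF alt(1)]] factor_closed[OF z] by simp
  ultimately show ?thesis using that[of "gs @ [(t, z)]"] by simp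
next
  case True
  obtain gs0 y where gs: "gs = gs0 @ [y]" using alt(2) by (cases gs rule: rev_cases) auto
  have y: "alternating gs0" "snd y \<in> factor (fst y)" "snd y \<notin> amalgamated"
    "gs0 \<noteq> [] \<longrightarrow> fst (last gs0) \<noteq> fst y"
    using alt(1) unfolding gs alternating_snoc by auto
  have yC: "snd y \<in> carrier W" by (rule factor_closed[OF y(2)])
  have gs0C: "\<forall>x\<in>set gs0. snd x \<in> carrier W" by (rule alternating_closed[OF y(1)])
  have "snd y \<otimes> z \<notin> amalgamated" using amalgamated_mult_right_iff[OF True yC] y(3) by simp
  then have "alternating (gs0 @ [(fst y, snd y \<otimes> z)])" unfolding alternating_snoc
    using y m_factor[OF y(2) amalgamated_factor[OF True]] by simp
  moreover have "word_prod (gs0 @ [(fst y, snd y \<otimes> z)]) = word_prod gs \<otimes> z"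
    unfolding gs
      using word_prod_snoc[OF gs0C] yC amalgamated_closed[OF True] word_prod_closed[OF gs0C]
      by (simp add: m_assoc)
  ultimately show ?thesis using that[of "gs0 @ [(fst y, snd y \<otimes> z)]"] gs by simp
qed

end

subsection \<open>Amalgamated products\<close>

text \<open>Such an action of W on the normal forms exists exactly when W is the amalgamated product of
  A and D over {1, c}; it is what makes nonempty alternating words nontrivial.\<close>

locale amalgam = amalgam_forms +
  fixes \<Phi> :: "'a \<Rightarrow> bool \<times> (bool \<times> 'a) list \<Rightarrow> bool \<times> (bool \<times> 'a) list"
  assumes \<Phi>_closed: "x \<in> carrier W \<Longrightarrow> y \<in> normal_forms \<Longrightarrow> \<Phi> x y \<in> normal_forms"
    and \<Phi>_mult: "x \<in> carrier W \<Longrightarrow> z \<in> carrier W \<Longrightarrow> y \<in> normal_forms \<Longrightarrow> \<Phi> (x \<otimes> z) y = \<Phi> x (\<Phi> z y)"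
    and \<Phi>_factor: "a \<in> factor t \<Longrightarrow> y \<in> normal_forms \<Longrightarrow> \<Phi> a y = act t a y"
    and generated: "carrier W = generate W (A \<union> D)"
begin

lemma factor_cases: "a \<in> A \<union> D \<Longrightarrow> \<exists>t. a \<in> factor t"
  unfolding factor_def by (metis (full_types) Un_iff)

lemma form_value_closed: "y \<in> normal_forms \<Longrightarrow> form_value y \<in> carrier W"
  unfolding form_value_def normal_forms_def using cpow_closed word_prod_closed normal_word_closed
  by simp

lemma form_value_\<Phi>:
  assumes "x \<in> carrier W" "y \<in> normal_forms"
  shows "form_value (\<Phi> x y) = x \<otimes> form_value y"
proof -
  have "x \<in> generate W (A \<union> D)" using assms(1) generated by simp
  then show ?thesis using assms(2)
  proof (induction arbitrary: y rule: generate.induct)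
    case one
    then show ?case using \<Phi>_factor[OF one_factor] act_one form_value_closed by simp
  next
    case (incl h)
    then obtain t where "h \<in> factor t" using factor_cases by blast
    then show ?case using incl \<Phi>_factor form_value_act by simp
  next
    case (inv h)
    then obtain t where "inv h \<in> factor t" using factor_cases inv_factor by blast
    then show ?case using inv \<Phi>_factor form_value_act by simp
  next
    case (eng h1 h2)
    have "h1 \<in> carrier W" "h2 \<in> carrier W"
      using eng.hyps generate_in_carrier[of "A \<union> D"] factor_closed[of _ True]
        factor_closed[of _ False]
      unfolding factor_def by auto
    then show ?case using eng \<Phi>_mult \<Phi>_closed form_value_closed by (simp add: m_assoc)
  qed
qed

lemma \<Phi>_one: "y \<in> normal_forms \<Longrightarrow> \<Phi> \<one> y = y"
  using \<Phi>_factor[OF one_factor] act_one by simp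

lemma carrier_cases:
  assumes "x \<in> carrier W"
  shows "x \<in> amalgamated \<or> (\<exists>gs. gs \<noteq> [] \<and> alternating gs \<and> x = word_prod gs)"
proof -
  obtain e xs where p: "\<Phi> x (False, []) = (e, xs)" by (cases "\<Phi> x (False, [])")
  have empty: "(False, []) \<in> normal_forms" unfolding normal_forms_def normal_word_def by simp
  have ok: "normal_word xs" using \<Phi>_closed[OF assms empty] p unfolding normal_forms_def by simp
  have x: "x = cpow e \<otimes> word_prod xs"
    using form_value_\<Phi>[OF assms empty] p assms unfolding form_value_def
    by (simp add: word_prod_def cpow_def)
  show ?thesis
  proof (cases xs)
    case Nil
    then show ?thesis using x cpow_amalgamated cpow_closed by (simp add: word_prod_def)
  next
    case (Cons y ys)
    have y: "snd y \<in> factor (fst y)" "snd y \<notin> amalgamated" "normal_word ys"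
      "ys \<noteq> [] \<longrightarrow> fst y \<noteq> fst (hd ys)"
      using ok Cons normal_word_Cons by auto
    have yc: "snd y \<in> carrier W" using y(1) factor_closed by blast
    let ?gs = "(fst y, cpow e \<otimes> snd y) # ys"
    have "alternating ys" using y(3) unfolding alternating_def normal_word_def by blast
    then have "alternating ?gs" unfolding alternating_Cons
      using m_factor[OF cpow_factor y(1)] amalgamated_mult_iff[OF cpow_amalgamated yc] y(2,4)
      by simp
    moreover have "x = word_prod ?gs"
      using x Cons yc cpow_closed word_prod_closed[OF normal_word_closed[OF y(3)]]
      by (simp add: word_prod_Cons m_assoc)
    ultimately show ?thesis by blast
  qed
qed

lemma \<Phi>_word_prod:
  "gs \<noteq> [] \<Longrightarrow> alternating gs \<Longrightarrow>
     snd (\<Phi> (word_prod gs) (False, [])) \<noteq> [] \<and>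
     fst (hd (snd (\<Phi> (word_prod gs) (False, [])))) = fst (hd gs)"
proof (induction gs)
  case (Cons y gs)
  obtain t a where y: "y = (t, a)" by (cases y)
  have a: "a \<in> factor t" "a \<notin> amalgamated"
    and alt: "alternating gs" "gs \<noteq> [] \<longrightarrow> t \<noteq> fst (hd gs)"
    using Cons.prems(2) unfolding alternating_Cons y by auto
  have empty: "(False, []) \<in> normal_forms" unfolding normal_forms_def normal_word_def by simp
  have pC: "word_prod gs \<in> carrier W" by (rule word_prod_closed[OF alternating_closed[OF alt(1)]])
  define p where "p = \<Phi> (word_prod gs) (False, [])"
  have pX: "p \<in> normal_forms" unfolding p_def by (rule \<Phi>_closed[OF pC empty])
  have pY: "snd p \<in> normal_tails t"
  proof (cases "gs = []")
    case True
    then have "p = (False, [])" unfolding p_def using \<Phi>_one[OF empty] by (simp add: word_prod_def)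
    then show ?thesis unfolding normal_tails_def normal_word_def by simp
  next
    case False
    then show ?thesis using Cons.IH alt pX unfolding p_def normal_tails_def normal_forms_def by simp
  qed
  have "\<Phi> (word_prod (y # gs)) (False, []) = \<Phi> a p"
    unfolding p_def y word_prod_Cons using \<Phi>_mult[OF factor_closed[OF a(1)] pC empty] by simp
  also have "\<dots> = act t a (fst p, snd p)" using \<Phi>_factor[OF a(1) pX] by simp
  also have "\<dots> = (coset_sign (a \<otimes> cpow (fst p)), (t, coset_rep (a \<otimes> cpow (fst p))) # snd p)"
    by (rule act_extends_word[OF a pY])
  finally show ?case using y by simp
qed simp

lemma word_prod_notin_amalgamated:
  assumes "gs \<noteq> []" "alternating gs"
  shows "word_prod gs \<notin> amalgamated"
proof
  assume h: "word_prod gs \<in> amalgamated"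
  have empty: "(False, []) \<in> normal_forms" unfolding normal_forms_def normal_word_def by simp
  have "\<Phi> (word_prod gs) (False, []) = act True (word_prod gs) (False, [])"
    using \<Phi>_factor[OF amalgamated_factor[OF h] empty] .
  moreover have "act True z (False, []) \<in> {(False, []), (True, [])}" if "z \<in> amalgamated" for z
    using that act_one[OF empty] act_c[OF empty] unfolding amalgamated_def by auto
  ultimately have "snd (\<Phi> (word_prod gs) (False, [])) = []" using h by fastforce
  then show False using \<Phi>_word_prod[OF assms] by simp
qed

text \<open>A reduced word gs' a for x yields the reduced word gs' (a c a^-1) gs'^-1 for x c x^-1 = c,
  unless a commutes with c.\<close>

theorem commutes_c_imp_amalgamated:
  assumes factor_centralisers: "\<And>t a. a \<in> factor t \<Longrightarrow> a \<otimes> c = c \<otimes> a \<Longrightarrow> a \<in> amalgamated"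
    and x: "x \<in> carrier W" "x \<otimes> c = c \<otimes> x"
  shows "x \<in> amalgamated"
proof (rule ccontr)
  assume "x \<notin> amalgamated"
  then obtain gs where gs: "gs \<noteq> []" "alternating gs" "x = word_prod gs"
    using carrier_cases[OF x(1)] by blast
  obtain gs' y where "gs = gs' @ [y]" using gs(1) by (cases gs rule: rev_cases) auto
  moreover obtain t a where "y = (t, a)" by (cases y)
  ultimately have gs': "gs = gs' @ [(t, a)]" by simp
  have a: "a \<in> factor t" "a \<notin> amalgamated" and gs'C: "\<forall>y\<in>set gs'. snd y \<in> carrier W"
    using gs(2) alternating_closed unfolding gs' alternating_snoc by auto
  have aC: "a \<in> carrier W" by (rule factor_closed[OF a(1)])
  define z where "z = a \<otimes> c \<otimes> inv a"
  have z: "z \<in> factor t" unfolding z_def using m_factor inv_factor c_factor a(1) by blast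
  have "z \<noteq> \<one>" unfolding z_def using conj_eq_one_iff[OF aC c_closed] c_ne_one by simp
  moreover have "z \<noteq> c"
  proof
    assume "z = c"
    moreover have "a \<otimes> c = z \<otimes> a" unfolding z_def using aC c_closed by (simp add: m_assoc)
    ultimately have "a \<otimes> c = c \<otimes> a" by simp
    then show False using factor_centralisers[OF a(1)] a(2) by blast
  qed
  ultimately have "z \<notin> amalgamated" unfolding amalgamated_def by simp
  note conj = alternating_conjugate_word[OF gs(2)[unfolded gs'] z this]
  have "word_prod gs = word_prod gs' \<otimes> a" unfolding gs' using word_prod_snoc gs'C aC by simp
  moreover have "word_prod ((gs' @ [(t, z)]) @ inv_word gs') =
      word_prod gs' \<otimes> z \<otimes> inv (word_prod gs')"
    by (rule conj(2))
  ultimately have "word_prod ((gs' @ [(t, z)]) @ inv_word gs') = x \<otimes> c \<otimes> inv x"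
    unfolding z_def gs(3) using word_prod_closed[OF gs'C] aC c_closed
    by (simp add: m_assoc inv_mult_group)
  also have "\<dots> = c" using x c_closed by (simp add: m_assoc)
  finally show False
    using word_prod_notin_amalgamated[OF _ conj(1)] unfolding amalgamated_def by simp
qed

text \<open>If the first and last letters lay in different factors, the square would be a nonempty
  alternating word; so they lie in one factor, and conjugating by the first letter shortens the
  word.\<close>

lemma alternating_involution_shorter:
  assumes alt: "alternating gs" "length gs \<ge> 2"
    and sq: "word_prod gs \<otimes> word_prod gs = \<one>"
  obtains h gs' where "h \<in> carrier W" "gs' \<noteq> []" "alternating gs'" "length gs' < length gs"
    "word_prod gs = h \<otimes> word_prod gs' \<otimes> inv h"
proof -
  obtain y rest where gs_Cons: "gs = y # rest" using alt(2) by (cases gs) auto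
  then have "rest \<noteq> []" using alt(2) by auto
  then obtain mid y2 where "rest = mid @ [y2]" by (cases rest rule: rev_cases) auto
  with gs_Cons have gs: "gs = y # mid @ [y2]" by simp
  have y: "snd y \<in> factor (fst y)" "mid @ [y2] \<noteq> [] \<longrightarrow> fst y \<noteq> fst (hd (mid @ [y2]))"
    and mid2: "alternating (mid @ [y2])" using alt(1) unfolding gs alternating_Cons by auto
  have mid: "alternating mid" "snd y2 \<in> factor (fst y2)" "mid \<noteq> [] \<longrightarrow> fst (last mid) \<noteq> fst y2"
    using mid2 unfolding alternating_snoc by auto
  have midC: "\<forall>z\<in>set mid. snd z \<in> carrier W" by (rule alternating_closed[OF mid(1)])
  define t a b where "t = fst y" and "a = snd y" and "b = snd y2"
  have same_side: "fst y2 = t"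
  proof (rule ccontr)
    assume "fst y2 \<noteq> t"
    then have "alternating (gs @ gs)"
      using alternating_append[of gs gs] alt(1) unfolding gs t_def by simp
    moreover have "word_prod (gs @ gs) = \<one>"
      using word_prod_append[OF alternating_closed[OF alt(1)] alternating_closed[OF alt(1)]] sq
      by simp
    ultimately show False using word_prod_notin_amalgamated[of "gs @ gs"]
      unfolding gs amalgamated_def by auto
  qed
  have ab: "a \<in> factor t" "b \<in> factor t" "a \<in> carrier W" "b \<in> carrier W"
    using y(1) mid(2) same_side factor_closed unfolding t_def a_def b_def by auto
  have "mid \<noteq> []" using y(2) same_side unfolding t_def by auto
  have "word_prod gs = a \<otimes> (word_prod mid \<otimes> b)"
    unfolding gs word_prod_Cons a_def b_def using word_prod_snoc[OF midC] ab(4)[unfolded b_def]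
    by simp
  then have prod: "word_prod gs = a \<otimes> (word_prod mid \<otimes> (b \<otimes> a)) \<otimes> inv a"
    using ab word_prod_closed[OF midC] by (simp add: m_assoc)
  obtain gs' where "gs' \<noteq> []" "alternating gs'" "length gs' \<le> Suc (length mid)"
    "word_prod gs' = word_prod mid \<otimes> (b \<otimes> a)"
    using alternating_times_factor[OF mid(1) \<open>mid \<noteq> []\<close> _ m_factor[OF ab(2,1)]] mid(3) same_side
    \<open>mid \<noteq> []\<close> by blast
  then show ?thesis using that[OF ab(3), of gs'] prod unfolding gs by simp
qed

lemma alternating_involution_conjugate:
  assumes "gs \<noteq> []" "alternating gs" "word_prod gs \<otimes> word_prod gs = \<one>"
  shows "\<exists>t. \<exists>b\<in>factor t. conjugate W b (word_prod gs)"
  using assms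
proof (induction "length gs" arbitrary: gs rule: less_induct)
  case less
  show ?case
  proof (cases "length gs \<ge> 2")
    case True
    then obtain h gs' where h: "h \<in> carrier W" "gs' \<noteq> []" "alternating gs'" "length gs' < length gs"
      "word_prod gs = h \<otimes> word_prod gs' \<otimes> inv h"
      using alternating_involution_shorter less.prems(2,3) by blast
    have P': "word_prod gs' \<in> carrier W" by (rule word_prod_closed[OF alternating_closed[OF h(3)]])
    have conj: "conjugate W (word_prod gs') (word_prod gs)" unfolding conjugate_def using h(1,5)
      by blast
    then have "word_prod gs' \<otimes> word_prod gs' = \<one>"
      using conjugate_square_eq_one_iff[OF _ P'] less.prems(3) by blast
    then obtain t b where "b \<in> factor t" "conjugate W b (word_prod gs')"
      using less.hyps[OF h(4) h(2,3)] by blast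
    then show ?thesis using conjugate_trans[OF _ conj] factor_closed by blast
  next
    case False
    moreover have "0 < length gs" using less.prems(1) by simp
    ultimately have "length gs = Suc 0" by linarith
    then obtain y where gs: "gs = [y]" using length_Suc_conv[of gs 0] by auto
    then have y: "snd y \<in> factor (fst y)" using less.prems(2) alternating_Cons by simp
    then have "word_prod gs = snd y" using factor_closed unfolding gs by (simp add: word_prod_def)
    then show ?thesis using conjugate_refl[OF factor_closed[OF y]] y by auto
  qed
qed

theorem involution_conjugate_into_factor:
  assumes "w \<in> carrier W" "w \<otimes> w = \<one>" "w \<noteq> \<one>"
  shows "\<exists>t. \<exists>b\<in>factor t. b \<otimes> b = \<one> \<and> b \<noteq> \<one> \<and> conjugate W b w"
proof -
  have "\<exists>t. \<exists>b\<in>factor t. conjugate W b w"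
  proof (cases "w \<in> amalgamated")
    case True
    then show ?thesis using assms(1) conjugate_refl amalgamated_factor by blast
  next
    case False
    then show ?thesis using carrier_cases[OF assms(1)] alternating_involution_conjugate assms(2)
      by blast
  qed
  then show ?thesis
    using assms conjugate_square_eq_one_iff conjugate_eq_one_iff factor_closed by blast
qed

end

definition reflection_properties :: "('a, 'b) monoid_scheme \<Rightarrow> nat set \<Rightarrow> (nat \<Rightarrow> 'a) \<Rightarrow> bool" where
  "reflection_properties G I g \<longleftrightarrow>
     (\<forall>i\<in>I. \<forall>j\<in>I. conjugate G (g i) (g j)) \<and>
     (\<forall>i\<in>I. centraliser G (g i) \<subseteq> {\<one>\<^bsub>G\<^esub>, g i}) \<and>
     (\<forall>w\<in>carrier G. w \<otimes>\<^bsub>G\<^esub> w = \<one>\<^bsub>G\<^esub> \<longrightarrow> w \<noteq> \<one>\<^bsub>G\<^esub> \<longrightarrow> (\<exists>i\<in>I. conjugate G (g i) w))"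

subsection \<open>Removing a leaf from an odd Coxeter tree\<close>

locale coxeter_leaf_step =
  fixes W :: "('a, 'b) monoid_scheme" (structure) and I g m v u k
  assumes presentation: "has_presentation W I g (coxeter_relators_on I m)"
    and matrix: "coxeter_matrix_on I m"
    and leaf: "cox_leaf_on I m v u"
    and leaf_edge: "m v u = enat k" and odd_k: "odd k"
    and reflection_properties_rest:
      "reflection_properties (W\<lparr>carrier := generate W (g ` (I - {v}))\<rparr>) (I - {v}) g"
begin

sublocale group W by (rule has_presentation_group[OF presentation])

lemma v_in_I: "v \<in> I" and u_in_I: "u \<in> I" and u_ne_v: "u \<noteq> v"
  using leaf unfolding cox_leaf_on_def by auto

lemma gen_closed: "i \<in> I \<Longrightarrow> g i \<in> carrier W"
  by (rule has_presentation_gen[OF presentation])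

lemma gen_square: "i \<in> I \<Longrightarrow> g i \<otimes> g i = \<one>"
  by (rule coxeter_gen_square[OF presentation matrix])

definition A :: "'a set" where "A = generate W (g ` (I - {v}))"

definition D :: "'a set" where "D = generate W {g u, g v}"

sublocale dihedral: odd_dihedral W "g u" "g v" k
proof
  have "m u v = enat k" using leaf_edge coxeter_matrix_on_sym[OF matrix v_in_I u_in_I] by simp
  then show "(g u \<otimes> g v) [^] k = \<one>" by (rule coxeter_pow_eq_one[OF presentation u_in_I v_in_I])
qed (use gen_closed gen_square u_in_I v_in_I odd_k in auto)

lemma gen_in_A: "i \<in> I \<Longrightarrow> i \<noteq> v \<Longrightarrow> g i \<in> A"
  unfolding A_def by (auto intro: generate.incl)

lemma gen_in_D: "g u \<in> D" "g v \<in> D"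
  unfolding D_def by (auto intro: generate.incl)

lemma subgroup_A: "subgroup A W"
  unfolding A_def by (rule generate_is_subgroup) (use gen_closed in auto)

lemma subgroup_D: "subgroup D W"
  unfolding D_def by (rule generate_is_subgroup) (use gen_closed u_in_I v_in_I in auto)

sublocale forms: amalgam_forms W A D "g u"
  by (rule amalgam_forms.intro[OF is_group amalgam_forms_axioms.intro[OF subgroup_A subgroup_D
      gen_in_A[OF u_in_I u_ne_v] gen_in_D(1) gen_square[OF u_in_I]
      coxeter_gen_ne_one[OF presentation u_in_I]]])

lemma gen_in_factor: "i \<in> I \<Longrightarrow> g i \<in> forms.factor (i \<noteq> v)"
  unfolding forms.factor_def using gen_in_A gen_in_D by auto

definition gen_act :: "nat \<Rightarrow> bool \<times> (bool \<times> 'a) list \<Rightarrow> bool \<times> (bool \<times> 'a) list" where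
  "gen_act i = (if i \<in> I then forms.act (i \<noteq> v) (g i) else id)"

lemma gen_act_closed: "y \<in> forms.normal_forms \<Longrightarrow> gen_act i y \<in> forms.normal_forms"
  unfolding gen_act_def using forms.act_closed gen_in_factor by simp

lemma gen_act_involutive: "i \<in> I \<Longrightarrow> y \<in> forms.normal_forms \<Longrightarrow> gen_act i (gen_act i y) = y"
  unfolding gen_act_def
  using forms.act_mult[OF gen_in_factor gen_in_factor, symmetric] gen_square forms.act_one by simp

text \<open>g u lies in both factors and acts in the same way through either of them, so every
  relator pair (i, j) acts through a single factor: the leaf v is joined only to u.\<close>

lemma gen_act_pair:
  assumes "i \<in> I" "j \<in> I" "m i j < \<infinity>"
  obtains t where "g i \<in> forms.factor t" "g j \<in> forms.factor t"
    "\<And>y. y \<in> forms.normal_forms \<Longrightarrow> gen_act i y = forms.act t (g i) y"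
    "\<And>y. y \<in> forms.normal_forms \<Longrightarrow> gen_act j y = forms.act t (g j) y"
proof -
  have u_both: "forms.act t (g u) y = forms.act t' (g u) y" if "y \<in> forms.normal_forms" for t t' y
    using forms.act_c[OF that] by simp
  have neighbour: "i = v \<Longrightarrow> j = v \<or> j = u" "j = v \<Longrightarrow> i = v \<or> i = u"
    using assms leaf coxeter_matrix_on_sym[OF matrix assms(1,2)] unfolding cox_leaf_on_def by force+
  have side_False: "g x \<in> forms.factor False"
    "\<And>y. y \<in> forms.normal_forms \<Longrightarrow> gen_act x y = forms.act False (g x) y"
    if "x = v \<or> x = u" "x \<in> I" for x
    using that gen_in_factor[of v] forms.c_factor u_both u_ne_v unfolding gen_act_def by auto
  show ?thesis
  proof (cases "i = v \<or> j = v")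
    case True
    then have "i = v \<or> i = u" "j = v \<or> j = u" using neighbour by auto
    then show ?thesis using that[of False] side_False assms(1,2) by blast
  next
    case False
    then show ?thesis
      using that[of True] gen_in_factor[OF assms(1)] gen_in_factor[OF assms(2)] assms(1,2)
      unfolding gen_act_def by simp
  qed
qed

lemma gen_act_relator:
  assumes "r \<in> coxeter_relators_on I m" "y \<in> forms.normal_forms"
  shows "act_word gen_act r y = y"
proof -
  obtain i j n where r: "r = concat (replicate n [(i, False), (j, False)])" "i \<in> I" "j \<in> I"
    "m i j = enat n"
    using assms(1) unfolding coxeter_relators_on_def by blast
  obtain t where t: "g i \<in> forms.factor t" "g j \<in> forms.factor t"
    "\<And>y. y \<in> forms.normal_forms \<Longrightarrow> gen_act i y = forms.act t (g i) y"
    "\<And>y. y \<in> forms.normal_forms \<Longrightarrow> gen_act j y = forms.act t (g j) y"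
    using gen_act_pair[OF r(2,3)] r(4) by auto
  have "((gen_act i \<circ> gen_act j) ^^ l) y = forms.act t ((g i \<otimes> g j) [^] l) y" for l
  proof (induction l)
    case (Suc l)
    have ij: "g i \<otimes> g j \<in> forms.factor t" by (rule forms.m_factor[OF t(1,2)])
    have pow: "(g i \<otimes> g j) [^] l \<in> forms.factor t"
      using ij by (induction l) (auto intro: forms.m_factor forms.one_factor)
    show ?case
      using Suc forms.act_closed[OF pow assms(2)] forms.act_closed[OF t(2)] t(3,4)
        forms.act_mult[OF t(1,2)] forms.act_mult[OF ij pow assms(2)]
        nat_pow_Suc2[OF forms.factor_closed[OF ij], of l]
      by simp
  qed (simp add: forms.act_one[OF assms(2)])
  then show ?thesis
    unfolding r(1) act_word_replicate
    using coxeter_pow_eq_one[OF presentation r(2,3,4)] forms.act_one[OF assms(2)] by simp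
qed

sublocale action: presented_action W I g "coxeter_relators_on I m" forms.normal_forms gen_act
  by unfold_locales (use gen_act_closed gen_act_involutive gen_act_relator presentation in auto)

lemma induced_action_generate:
  assumes "S \<subseteq> forms.factor t"
    and agree: "\<And>s y. s \<in> S \<Longrightarrow> y \<in> forms.normal_forms \<Longrightarrow> action.\<Phi> s y = forms.act t s y"
    and "x \<in> generate W S" "y \<in> forms.normal_forms"
  shows "action.\<Phi> x y = forms.act t x y"
  using assms(3,4)
proof (induction arbitrary: y rule: generate.induct)
  case one
  then show ?case using action.induced_action_one forms.act_one by simp
next
  case (incl h)
  then show ?case using agree by simp
next
  case (inv h)
  have h: "h \<in> forms.factor t" "h \<in> carrier W" using inv assms(1) forms.factor_closed by auto
  have "action.\<Phi> (inv h) y = forms.act t (inv h) (forms.act t h (action.\<Phi> (inv h) y))"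
    using forms.act_mult[OF forms.inv_factor[OF h(1)] h(1)] forms.act_one
      action.induced_action_closed
      inv.prems h by simp
  also have "\<dots> = forms.act t (inv h) y"
    using agree[OF inv.hyps] action.induced_action_mult[of h "inv h" y] action.induced_action_one
      action.induced_action_closed inv.prems h by simp
  finally show ?case .
next
  case (eng h1 h2)
  have h: "h1 \<in> forms.factor t" "h2 \<in> forms.factor t"
    using eng.hyps generate_subgroup_incl[OF assms(1) forms.subgroup_factor] by auto
  have "action.\<Phi> (h1 \<otimes> h2) y = action.\<Phi> h1 (action.\<Phi> h2 y)"
    using action.induced_action_mult forms.factor_closed h eng.prems by blast
  also have "\<dots> = forms.act t h1 (forms.act t h2 y)"
    using eng.IH eng.prems forms.act_closed[OF h(2)] by simp
  also have "\<dots> = forms.act t (h1 \<otimes> h2) y" using forms.act_mult[OF h eng.prems] by simp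
  finally show ?case .
qed

lemma induced_action_factor:
  assumes a: "a \<in> forms.factor t" and y: "y \<in> forms.normal_forms"
  shows "action.\<Phi> a y = forms.act t a y"
proof (cases t)
  case True
  show ?thesis
  proof (rule induced_action_generate[OF _ _ _ y])
    show "g ` (I - {v}) \<subseteq> forms.factor t" using gen_in_A True unfolding forms.factor_def by auto
    show "action.\<Phi> s z = forms.act t s z"
      if s: "s \<in> g ` (I - {v})" and z: "z \<in> forms.normal_forms" for s z
    proof -
      obtain i where "i \<in> I" "i \<noteq> v" "s = g i" using s by blast
      then show ?thesis using action.induced_action_gen[OF _ z] True unfolding gen_act_def by simp
    qed
    show "a \<in> generate W (g ` (I - {v}))" using a True unfolding forms.factor_def
      by (simp add: A_def)
  qed
next
  case False
  show ?thesis
  proof (rule induced_action_generate[OF _ _ _ y])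
    show "{g u, g v} \<subseteq> forms.factor t" using gen_in_D False unfolding forms.factor_def by simp
    show "action.\<Phi> s z = forms.act t s z"
      if s: "s \<in> {g u, g v}" and z: "z \<in> forms.normal_forms" for s z
    proof -
      have "action.\<Phi> (g u) z = forms.act False (g u) z"
        using action.induced_action_gen[OF u_in_I z] u_in_I u_ne_v forms.act_c[OF z]
        unfolding gen_act_def by simp
      moreover have "action.\<Phi> (g v) z = forms.act False (g v) z"
        using action.induced_action_gen[OF v_in_I z] v_in_I unfolding gen_act_def by simp
      ultimately show ?thesis using s False by auto
    qed
    show "a \<in> generate W {g u, g v}" using a False unfolding forms.factor_def by (simp add: D_def)
  qed
qed

sublocale amalgam W A D "g u" action.\<Phi>
proof
  show "x \<in> carrier W \<Longrightarrow> y \<in> forms.normal_forms \<Longrightarrow> action.\<Phi> x y \<in> forms.normal_forms" for x y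
    by (rule action.induced_action_closed)
  show "x \<in> carrier W \<Longrightarrow> z \<in> carrier W \<Longrightarrow> y \<in> forms.normal_forms \<Longrightarrow>
      action.\<Phi> (x \<otimes> z) y = action.\<Phi> x (action.\<Phi> z y)" for x z y
    by (rule action.induced_action_mult)
  show "a \<in> forms.factor t \<Longrightarrow> y \<in> forms.normal_forms \<Longrightarrow> action.\<Phi> a y = forms.act t a y" for a t y
    by (rule induced_action_factor)
  have "g ` I \<subseteq> A \<union> D" using gen_in_A gen_in_D by auto
  then show "carrier W = generate W (A \<union> D)"
    using has_presentation_carrier_generate[OF presentation] mono_generate generate_incl
      subgroup.subset[OF subgroup_A] subgroup.subset[OF subgroup_D]
    by (metis Un_subset_iff subset_antisym)
qed

lemma conjugate_u_gen:
  assumes "i \<in> I"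
  shows "conjugate W (g u) (g i)"
proof (cases "i = v")
  case True
  then show ?thesis
    using dihedral.dihedral_involution_conjugate[OF dihedral.t_in_dihedral] gen_square[OF v_in_I]
      coxeter_gen_ne_one[OF presentation v_in_I] by simp
next
  case False
  then have "conjugate (W\<lparr>carrier := A\<rparr>) (g u) (g i)"
    using reflection_properties_rest assms u_in_I u_ne_v unfolding reflection_properties_def A_def
    by blast
  then show ?thesis by (rule conjugate_in_subgroup[OF subgroup_A])
qed

lemma centraliser_u: "centraliser W (g u) \<subseteq> {\<one>, g u}"
proof
  fix x assume "x \<in> centraliser W (g u)"
  then have x: "x \<in> carrier W" "x \<otimes> g u = g u \<otimes> x" unfolding centraliser_def by auto
  have "a \<in> forms.amalgamated" if a: "a \<in> forms.factor t" "a \<otimes> g u = g u \<otimes> a" for t a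
  proof (cases t)
    case True
    then have "a \<in> centraliser (W\<lparr>carrier := A\<rparr>) (g u)"
      using a unfolding forms.factor_def centraliser_def by simp
    then show ?thesis
      using reflection_properties_rest u_in_I u_ne_v
        unfolding reflection_properties_def forms.amalgamated_def A_def
        by auto
  next
    case False
    then have "a \<in> dihedral.dihedral"
      using a dihedral.generate_subset_dihedral unfolding forms.factor_def by (auto simp: D_def)
    then show ?thesis
      using dihedral.dihedral_centraliser_s a(2) unfolding forms.amalgamated_def by simp
  qed
  then show "x \<in> {\<one>, g u}" using commutes_c_imp_amalgamated x unfolding forms.amalgamated_def by blast
qed

lemma involution_conjugate_gen:
  assumes "w \<in> carrier W" "w \<otimes> w = \<one>" "w \<noteq> \<one>"
  shows "\<exists>i\<in>I. conjugate W (g i) w"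
proof -
  obtain t b where b: "b \<in> forms.factor t" "b \<otimes> b = \<one>" "b \<noteq> \<one>" "conjugate W b w"
    using involution_conjugate_into_factor[OF assms] by blast
  have bC: "b \<in> carrier W" by (rule forms.factor_closed[OF b(1)])
  obtain i where "i \<in> I" "conjugate W (g i) b"
  proof (cases t)
    case True
    then have "b \<in> A" using b(1) unfolding forms.factor_def by simp
    then have "\<exists>i\<in>I - {v}. conjugate (W\<lparr>carrier := A\<rparr>) (g i) b"
      using reflection_properties_rest b(2,3) unfolding reflection_properties_def A_def by simp
    then obtain i where "i \<in> I - {v}" "conjugate (W\<lparr>carrier := A\<rparr>) (g i) b" by blast
    then show ?thesis using that conjugate_in_subgroup[OF subgroup_A] by blast
  next
    case False
    then have "b \<in> dihedral.dihedral"
      using b(1) dihedral.generate_subset_dihedral unfolding forms.factor_def by (auto simp: D_def)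
    then show ?thesis using that[OF u_in_I] dihedral.dihedral_involution_conjugate b(2,3) by blast
  qed
  then show ?thesis using conjugate_trans b(4) gen_closed by blast
qed

theorem reflection_properties: "reflection_properties W I g"
  unfolding reflection_properties_def
proof (intro conjI ballI impI)
  fix i j assume i: "i \<in> I" and j: "j \<in> I"
  have "conjugate W (g i) (g u)"
    by (rule conjugate_sym[OF conjugate_u_gen[OF i] gen_closed[OF u_in_I]])
  then show "conjugate W (g i) (g j)"
    by (rule conjugate_trans[OF _ conjugate_u_gen[OF j] gen_closed[OF i]])
next
  fix i assume "i \<in> I"
  then obtain h where h: "h \<in> carrier W" "g i = h \<otimes> g u \<otimes> inv h"
    using conjugate_u_gen unfolding conjugate_def by blast
  then have "centraliser W (g i) = (\<lambda>y. h \<otimes> y \<otimes> inv h) ` centraliser W (g u)"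
    using centraliser_conjugate gen_closed[OF u_in_I] by simp
  also have "\<dots> \<subseteq> (\<lambda>y. h \<otimes> y \<otimes> inv h) ` {\<one>, g u}" using centraliser_u by blast
  also have "\<dots> = {\<one>, g i}" using h by simp
  finally show "centraliser W (g i) \<subseteq> {\<one>, g i}" .
next
  fix w assume "w \<in> carrier W" "w \<otimes> w = \<one>" "w \<noteq> \<one>"
  then show "\<exists>i\<in>I. conjugate W (g i) w" by (rule involution_conjugate_gen)
qed

end

lemma reflection_properties_singleton:
  assumes pres: "has_presentation W {i} g (coxeter_relators_on {i} m)"
    and mat: "coxeter_matrix_on {i} m"
  shows "reflection_properties W {i} g"
proof -
  interpret group W by (rule has_presentation_group[OF pres])
  have gi: "g i \<in> carrier W" by (rule has_presentation_gen[OF pres]) simp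
  have "carrier W = {\<one>\<^bsub>W\<^esub>, g i}"
    using has_presentation_carrier_generate[OF pres] generate_involution[OF gi]
      coxeter_gen_square[OF pres mat] by simp
  then show ?thesis
    unfolding reflection_properties_def centraliser_def using conjugate_refl[OF gi] by auto
qed

theorem reflection_properties_odd_tree:
  assumes "finite I" "I \<noteq> {}" "has_presentation W I g (coxeter_relators_on I m)"
    "coxeter_matrix_on I m" "odd_coxeter_on I m" "cox_connected_on I m" "\<not> cox_has_cycle_on I m"
  shows "reflection_properties W I g"
  using assms
proof (induction "card I" arbitrary: I W rule: less_induct)
  case less
  note fin = less.prems(1) and pres = less.prems(3) and mat = less.prems(4)
  show ?case
  proof (cases "card I \<ge> 2")
    case False
    moreover have "0 < card I" using fin less.prems(2) by (simp add: card_gt_0_iff)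
    ultimately have "card I = 1" by linarith
    then obtain i where "I = {i}" by (rule card_1_singletonE)
    then show ?thesis using reflection_properties_singleton pres mat by simp
  next
    case True
    obtain v u where leaf: "cox_leaf_on I m v u"
      using cox_leaf_on_exists[OF fin True less.prems(6,7) mat] .
    then have vu: "v \<in> I" "u \<in> I" "u \<noteq> v" "m v u < \<infinity>" unfolding cox_leaf_on_def by auto
    then obtain k where k: "m v u = enat k" "odd k"
      using less.prems(5) unfolding odd_coxeter_on_def by fastforce
    have "reflection_properties (W\<lparr>carrier := generate W (g ` (I - {v}))\<rparr>) (I - {v}) g"
    proof (rule less.hyps)
      show "card (I - {v}) < card I" by (rule card_Diff1_less[OF fin vu(1)])
      show "has_presentation (W\<lparr>carrier := generate W (g ` (I - {v}))\<rparr>) (I - {v}) g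
          (coxeter_relators_on (I - {v}) m)"
        by (rule has_presentation_delete_leaf[OF pres mat leaf])
      show "cox_connected_on (I - {v}) m"
        by (rule cox_connected_on_delete_leaf[OF less.prems(6) mat leaf])
      show "\<not> cox_has_cycle_on (I - {v}) m" using less.prems(7) cox_has_cycle_on_mono by blast
    qed (use fin vu mat less.prems(5) coxeter_matrix_on_subset odd_coxeter_on_subset in auto)
    then show ?thesis
      using coxeter_leaf_step.reflection_properties coxeter_leaf_step.intro pres mat leaf k by blast
  qed
qed

theorem lemma2p7:
  fixes W :: "('a, 'b) monoid_scheme" and n :: nat and g :: "nat \<Rightarrow> 'a"
    and m :: "nat \<Rightarrow> nat \<Rightarrow> enat" and w :: 'a
  assumes "coxeter_system W n g m"
    and "odd_coxeter n m"
    and "cox_connected n m"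
    and "n \<ge> 2"
    and "cox_tree n m"
    and "w \<in> carrier W" and "w \<noteq> \<one>\<^bsub>W\<^esub>" and "w \<otimes>\<^bsub>W\<^esub> w = \<one>\<^bsub>W\<^esub>"
  shows "centraliser W w = generate W {w}"
proof -
  have pres: "has_presentation W {1..n} g (coxeter_relators_on {1..n} m)"
    using assms(1) unfolding coxeter_system_def coxeter_relators_eq_on by blast
  interpret group W by (rule has_presentation_group[OF pres])
  have "reflection_properties W {1..n} g"
    using assms(1-5) pres reflection_properties_odd_tree[of "{1..n}" W g m]
    unfolding coxeter_system_def coxeter_matrix_eq_on odd_coxeter_eq_on cox_connected_eq_on
      cox_tree_def cox_has_cycle_eq_on by simp
  then obtain i h where i: "i \<in> {1..n}" "g i \<in> carrier W"
    and h: "h \<in> carrier W" "w = h \<otimes>\<^bsub>W\<^esub> g i \<otimes>\<^bsub>W\<^esub> inv\<^bsub>W\<^esub> h"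
    and centr: "centraliser W (g i) \<subseteq> {\<one>\<^bsub>W\<^esub>, g i}"
    using assms(6-8) has_presentation_gen[OF pres] unfolding reflection_properties_def conjugate_def
    by blast
  have "centraliser W w = (\<lambda>y. h \<otimes>\<^bsub>W\<^esub> y \<otimes>\<^bsub>W\<^esub> inv\<^bsub>W\<^esub> h) ` centraliser W (g i)"
    using centraliser_conjugate h i by simp
  also have "\<dots> \<subseteq> {\<one>\<^bsub>W\<^esub>, w}" using centr h by auto
  finally have "centraliser W w = {\<one>\<^bsub>W\<^esub>, w}" using assms(6) unfolding centraliser_def by auto
  then show ?thesis using generate_involution assms(6,8) by simp
qed

end
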